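(* Let $(K,\mathscr T)$ be a stable compact stable topological space and $M$ a stable subset of $\mathscr C(K,L^0)$. Then $M$ is stable totally bounded with respect to the stable metric $d_\infty(f,g)=\max\{|f(x)-g(x)|:x\in K\}$ if and only if (i) for each $x\in K$ the set $M_x=\{f(x):f\in M\}$ is bounded, i.e. there is $r_x\in L^0$ with $|f(x)|\le r_x$ for all $f\in M$; and (ii) $M$ is stable equicontinuous.
   Context: $L^0$: real measurable functions on a probability space modulo a.e. equality, a.e. order, $L^0_{++}=\{r>0\text{ a.e.}\}$; $L^0$ carries the topology with base $\{s:|s-t|<r\}$, $t\in L^0$, $r\in L^0_{++}$. An $L^0$-module is stable if for each countable measurable partition $(A_k)$ and $(x_k)$ there is a unique $x=\sum_k1_{A_k}x_k$ with $1_{A_k}x=1_{A_k}x_k$; nonempty subsets closed under concatenation are stable; for stable $Y_k$, $\sum_k1_{A_k}Y_k=\{\sum_k1_{A_k}y_k:y_k\in Y_k\}$; a nonempty collection of stable sets is stable if closed under this operation; a map $f$ is stable if $f(\sum_k1_{A_k}x_k)=\sum_k1_{A_k}f(x_k)$. A stable topological space is a stable subset $K$ of a stable $L^0$-module with a topology having a base which is a stable collection of stable sets; it is stable compact if every stable filter (a filter with a filter base which is a stable collection of stable sets) has a cluster point in $K$. $\mathscr C(K,L^0)$ is the stable $L^0$-module of stable continuous $f:K\to L^0$; for stable compact $K$ the maximum in $d_\infty$ is attained and $d_\infty$ is a stable metric. $\mathrm{st}(X)$ denotes the concatenations of elements of $X$; a subset $N\subset M$ is stable finite if $N=\{\sum_k1_{A_k}y_k:y_k\in\mathrm{st}(X_k)\}$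 with finite nonempty $X_k\subset M$. $M$ is stable totally bounded for $d_\infty$ if for every $r\in L^0_{++}$ there is a stable finite $N\subset M$ with $M=\bigcup_{g\in N}\{f:d_\infty(f,g)<r\}$. $M$ is stable equicontinuous if for every $x\in K$ and $r\in L^0_{++}$ there is a neighbourhood $V$ of $x$ with $|f(x)-f(y)|\le r$ for all $y\in V$ and $f\in M$. *)

theory Defs
  imports "HOL-Probability.Probability"
begin

text \<open>Elements of L^0 are represented by Borel measurable functions on the sample space;
  equality and order in L^0 are a.e. equality and a.e. order.\<close>

definition L0 :: "'w measure \<Rightarrow> ('w \<Rightarrow> real) set" where
  "L0 P = borel_measurable P"

definition eqae :: "'w measure \<Rightarrow> ('w \<Rightarrow> real) \<Rightarrow> ('w \<Rightarrow> real) \<Rightarrow> bool" where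
  "eqae P s t \<longleftrightarrow> (AE w in P. s w = t w)"

definition leae :: "'w measure \<Rightarrow> ('w \<Rightarrow> real) \<Rightarrow> ('w \<Rightarrow> real) \<Rightarrow> bool" where
  "leae P s t \<longleftrightarrow> (AE w in P. s w \<le> t w)"

definition ltae :: "'w measure \<Rightarrow> ('w \<Rightarrow> real) \<Rightarrow> ('w \<Rightarrow> real) \<Rightarrow> bool" where
  "ltae P s t \<longleftrightarrow> (AE w in P. s w < t w)"

definition L0pp :: "'w measure \<Rightarrow> ('w \<Rightarrow> real) set" where
  "L0pp P = {r \<in> L0 P. AE w in P. 0 < r w}"

text \<open>Countable measurable partitions (pieces may be empty, so finite partitions are included).\<close>
definition l0_partition :: "'w measure \<Rightarrow> (nat \<Rightarrow> 'w set) \<Rightarrow> bool" where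
  "l0_partition P A \<longleftrightarrow> (\<forall>k. A k \<in> sets P) \<and> disjoint_family A \<and> (\<Union>k. A k) = space P"

definition l0cc :: "(nat \<Rightarrow> 'w set) \<Rightarrow> (nat \<Rightarrow> 'w \<Rightarrow> real) \<Rightarrow> 'w \<Rightarrow> real" where
  "l0cc A r = (\<lambda>w. \<Sum>k. indicator (A k) w * r k w)"

definition l0_ball :: "'w measure \<Rightarrow> ('w \<Rightarrow> real) \<Rightarrow> ('w \<Rightarrow> real) \<Rightarrow> ('w \<Rightarrow> real) set" where
  "l0_ball P t r = {s \<in> L0 P. ltae P (\<lambda>w. \<bar>s w - t w\<bar>) r}"

definition l0_open :: "'w measure \<Rightarrow> ('w \<Rightarrow> real) set \<Rightarrow> bool" where
  "l0_open P U \<longleftrightarrow> U \<subseteq> L0 P \<and>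
     (\<forall>s\<in>U. \<exists>t\<in>L0 P. \<exists>r\<in>L0pp P. s \<in> l0_ball P t r \<and> l0_ball P t r \<subseteq> U)"

definition stable_L0_module :: "'w measure \<Rightarrow> (('w \<Rightarrow> real) \<Rightarrow> 'e::ab_group_add \<Rightarrow> 'e) \<Rightarrow> bool" where
  "stable_L0_module P smul \<longleftrightarrow>
     (\<forall>r\<in>L0 P. \<forall>x y. smul r (x + y) = smul r x + smul r y) \<and>
     (\<forall>r\<in>L0 P. \<forall>s\<in>L0 P. \<forall>x. smul (\<lambda>w. r w + s w) x = smul r x + smul s x) \<and>
     (\<forall>r\<in>L0 P. \<forall>s\<in>L0 P. \<forall>x. smul (\<lambda>w. r w * s w) x = smul r (smul s x)) \<and>
     (\<forall>x. smul (\<lambda>w. 1) x = x) \<and>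
     (\<forall>r\<in>L0 P. \<forall>s\<in>L0 P. \<forall>x. eqae P r s \<longrightarrow> smul r x = smul s x) \<and>
     (\<forall>A xs. l0_partition P A \<longrightarrow>
        (\<exists>!x. \<forall>k. smul (indicator (A k)) x = smul (indicator (A k)) (xs k)))"

definition mcc :: "(('w \<Rightarrow> real) \<Rightarrow> 'e \<Rightarrow> 'e) \<Rightarrow> (nat \<Rightarrow> 'w set) \<Rightarrow> (nat \<Rightarrow> 'e) \<Rightarrow> 'e" where
  "mcc smul A xs = (THE x. \<forall>k. smul (indicator (A k)) x = smul (indicator (A k)) (xs k))"

definition stable_set :: "'w measure \<Rightarrow> (('w \<Rightarrow> real) \<Rightarrow> 'e \<Rightarrow> 'e) \<Rightarrow> 'e set \<Rightarrow> bool" where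
  "stable_set P smul S \<longleftrightarrow> S \<noteq> {} \<and>
     (\<forall>A xs. l0_partition P A \<and> (\<forall>k. xs k \<in> S) \<longrightarrow> mcc smul A xs \<in> S)"

definition cc_sets :: "(('w \<Rightarrow> real) \<Rightarrow> 'e \<Rightarrow> 'e) \<Rightarrow> (nat \<Rightarrow> 'w set) \<Rightarrow> (nat \<Rightarrow> 'e set) \<Rightarrow> 'e set" where
  "cc_sets smul A Ys = {mcc smul A xs | xs. \<forall>k. xs k \<in> Ys k}"

definition stable_coll :: "'w measure \<Rightarrow> (('w \<Rightarrow> real) \<Rightarrow> 'e \<Rightarrow> 'e) \<Rightarrow> 'e set set \<Rightarrow> bool" where
  "stable_coll P smul C \<longleftrightarrow> C \<noteq> {} \<and> (\<forall>S\<in>C. stable_set P smul S) \<and>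
     (\<forall>A Ys. l0_partition P A \<and> (\<forall>k. Ys k \<in> C) \<longrightarrow> cc_sets smul A Ys \<in> C)"

definition is_base :: "'e topology \<Rightarrow> 'e set set \<Rightarrow> bool" where
  "is_base X B \<longleftrightarrow> (\<forall>U\<in>B. openin X U) \<and>
     (\<forall>U. openin X U \<longrightarrow> (\<forall>x\<in>U. \<exists>V\<in>B. x \<in> V \<and> V \<subseteq> U))"

definition stable_top_space :: "'w measure \<Rightarrow> (('w \<Rightarrow> real) \<Rightarrow> 'e \<Rightarrow> 'e) \<Rightarrow> 'e topology \<Rightarrow> bool" where
  "stable_top_space P smul X \<longleftrightarrow> stable_set P smul (topspace X) \<and>
     (\<exists>B. is_base X B \<and> stable_coll P smul B)"

definition filter_on :: "'e set \<Rightarrow> 'e set set \<Rightarrow> bool" where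
  "filter_on K F \<longleftrightarrow> F \<subseteq> Pow K \<and> K \<in> F \<and> {} \<notin> F \<and>
     (\<forall>U\<in>F. \<forall>V. U \<subseteq> V \<and> V \<subseteq> K \<longrightarrow> V \<in> F) \<and>
     (\<forall>U\<in>F. \<forall>V\<in>F. U \<inter> V \<in> F)"

definition stable_filter :: "'w measure \<Rightarrow> (('w \<Rightarrow> real) \<Rightarrow> 'e \<Rightarrow> 'e) \<Rightarrow> 'e set \<Rightarrow> 'e set set \<Rightarrow> bool" where
  "stable_filter P smul K F \<longleftrightarrow> filter_on K F \<and>
     (\<exists>B. B \<subseteq> F \<and> (\<forall>U\<in>F. \<exists>V\<in>B. V \<subseteq> U) \<and> stable_coll P smul B)"

definition stable_compact :: "'w measure \<Rightarrow> (('w \<Rightarrow> real) \<Rightarrow> 'e \<Rightarrow> 'e) \<Rightarrow> 'e topology \<Rightarrow> bool" where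
  "stable_compact P smul X \<longleftrightarrow>
     (\<forall>F. stable_filter P smul (topspace X) F \<longrightarrow>
        (\<exists>x\<in>topspace X. \<forall>U\<in>F. x \<in> X closure_of U))"

definition stable_map :: "'w measure \<Rightarrow> (('w \<Rightarrow> real) \<Rightarrow> 'e \<Rightarrow> 'e) \<Rightarrow> 'e set \<Rightarrow> ('e \<Rightarrow> 'w \<Rightarrow> real) \<Rightarrow> bool" where
  "stable_map P smul K f \<longleftrightarrow>
     (\<forall>A xs. l0_partition P A \<and> (\<forall>k. xs k \<in> K) \<longrightarrow>
        eqae P (f (mcc smul A xs)) (l0cc A (\<lambda>k. f (xs k))))"

definition in_CKL0 :: "'w measure \<Rightarrow> (('w \<Rightarrow> real) \<Rightarrow> 'e \<Rightarrow> 'e) \<Rightarrow> 'e topology \<Rightarrow> ('e \<Rightarrow> 'w \<Rightarrow> real) \<Rightarrow> bool" where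
  "in_CKL0 P smul X f \<longleftrightarrow> (\<forall>x\<in>topspace X. f x \<in> L0 P) \<and> stable_map P smul (topspace X) f \<and>
     (\<forall>W. l0_open P W \<longrightarrow> openin X {x \<in> topspace X. f x \<in> W})"

definition fcc :: "(nat \<Rightarrow> 'w set) \<Rightarrow> (nat \<Rightarrow> 'e \<Rightarrow> 'w \<Rightarrow> real) \<Rightarrow> 'e \<Rightarrow> 'w \<Rightarrow> real" where
  "fcc A fs = (\<lambda>x. l0cc A (\<lambda>k. fs k x))"

text \<open>A stable subset of C(K,L^0) (functions identified when a.e. equal at every point of K).\<close>
definition stable_subset_C :: "'w measure \<Rightarrow> (('w \<Rightarrow> real) \<Rightarrow> 'e \<Rightarrow> 'e) \<Rightarrow> 'e topology \<Rightarrow> ('e \<Rightarrow> 'w \<Rightarrow> real) set \<Rightarrow> bool" where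
  "stable_subset_C P smul X M \<longleftrightarrow> M \<noteq> {} \<and> (\<forall>f\<in>M. in_CKL0 P smul X f) \<and>
     (\<forall>A fs. l0_partition P A \<and> (\<forall>k. fs k \<in> M) \<longrightarrow>
        (\<exists>g\<in>M. \<forall>x\<in>topspace X. eqae P (g x) (fcc A fs x)))"

text \<open>d_infty(f,g) = max {|f x - g x| : x in K}, the maximum w.r.t. the a.e. order (attained).\<close>
definition dinf :: "'w measure \<Rightarrow> 'e topology \<Rightarrow> ('e \<Rightarrow> 'w \<Rightarrow> real) \<Rightarrow> ('e \<Rightarrow> 'w \<Rightarrow> real) \<Rightarrow> 'w \<Rightarrow> real" where
  "dinf P X f g = (SOME m. \<exists>x\<in>topspace X. m = (\<lambda>w. \<bar>f x w - g x w\<bar>) \<and>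
      (\<forall>y\<in>topspace X. leae P (\<lambda>w. \<bar>f y w - g y w\<bar>) m))"

definition stF :: "'w measure \<Rightarrow> ('e \<Rightarrow> 'w \<Rightarrow> real) set \<Rightarrow> ('e \<Rightarrow> 'w \<Rightarrow> real) set" where
  "stF P Y = {fcc B zs | B zs. l0_partition P B \<and> (\<forall>j. zs j \<in> Y)}"

definition stable_finite :: "'w measure \<Rightarrow> ('e \<Rightarrow> 'w \<Rightarrow> real) set \<Rightarrow> ('e \<Rightarrow> 'w \<Rightarrow> real) set \<Rightarrow> bool" where
  "stable_finite P M N \<longleftrightarrow> (\<exists>A Y. l0_partition P A \<and>
     (\<forall>k. finite (Y k) \<and> Y k \<noteq> {} \<and> Y k \<subseteq> M) \<and>
     N = {fcc A ys | ys. \<forall>k. ys k \<in> stF P (Y k)})"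

definition stable_totally_bounded :: "'w measure \<Rightarrow> 'e topology \<Rightarrow> ('e \<Rightarrow> 'w \<Rightarrow> real) set \<Rightarrow> bool" where
  "stable_totally_bounded P X M \<longleftrightarrow>
     (\<forall>r\<in>L0pp P. \<exists>N. stable_finite P M N \<and>
        (\<forall>f\<in>M. \<exists>g\<in>N. ltae P (dinf P X f g) r))"

definition pointwise_bounded :: "'w measure \<Rightarrow> 'e topology \<Rightarrow> ('e \<Rightarrow> 'w \<Rightarrow> real) set \<Rightarrow> bool" where
  "pointwise_bounded P X M \<longleftrightarrow>
     (\<forall>x\<in>topspace X. \<exists>rx\<in>L0 P. \<forall>f\<in>M. leae P (\<lambda>w. \<bar>f x w\<bar>) rx)"

definition stable_equicontinuous :: "'w measure \<Rightarrow> 'e topology \<Rightarrow> ('e \<Rightarrow> 'w \<Rightarrow> real) set \<Rightarrow> bool" where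
  "stable_equicontinuous P X M \<longleftrightarrow>
     (\<forall>x\<in>topspace X. \<forall>r\<in>L0pp P. \<exists>V. (\<exists>U. openin X U \<and> x \<in> U \<and> U \<subseteq> V) \<and> V \<subseteq> topspace X \<and>
        (\<forall>y\<in>V. \<forall>f\<in>M. leae P (\<lambda>w. \<bar>f x w - f y w\<bar>) r))"

end

theory Submission
  imports Defs
begin

text \<open>
  Necessity: an \<open>r/3\<close>-net of \<open>M\<close> consists, on each piece of a partition, of finitely many
  functions; their maxima bound \<open>M\<close> pointwise, and concatenating their neighbourhoods of
  continuity along the partition gives a neighbourhood on which \<open>M\<close> varies by less than \<open>r\<close>.

  Sufficiency follows Arzela-Ascoli. Equicontinuity gives every \<open>x\<close> a basic stable
  neighbourhood \<open>W x\<close> on which \<open>M\<close> varies by at most \<open>r/3\<close>. Stable compactness yields a stable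
  finite subcover: the a.e.-greatest event admitting a cover by finitely many centres per piece
  of a partition is full, since otherwise the points left uncovered on its complement would form
  a directed stable collection of nonempty sets, whose common closure point \<open>z\<close> is covered by
  \<open>W z\<close>. At the
  finitely many centres, pointwise boundedness lets us round the values of \<open>M\<close> on pieces where
  bound and precision are constant, which gives a stable finite net at the centres; the triangle
  inequality turns it into an \<open>r\<close>-net for \<open>d\<^sub>\<infinity>\<close>. That \<open>d\<^sub>\<infinity>\<close> is a maximum is the same
  compactness argument, applied to the directed stable family of upper level sets of
  \<open>|f - g|\<close>.
\<close>

lemma l0_partition_sets: "l0_partition M A \<Longrightarrow> A k \<in> sets M"
  unfolding l0_partition_def by auto

lemma l0_partition_cover: "l0_partition M A \<Longrightarrow> w \<in> space M \<Longrightarrow> \<exists>k. w \<in> A k"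
  unfolding l0_partition_def by auto

lemma l0_partition_subset_space: "l0_partition M A \<Longrightarrow> w \<in> A k \<Longrightarrow> w \<in> space M"
  unfolding l0_partition_def by auto

lemma l0_partition_unique: "l0_partition M A \<Longrightarrow> w \<in> A k \<Longrightarrow> w \<in> A j \<Longrightarrow> j = k"
  unfolding l0_partition_def disjoint_family_on_def by auto

lemma AE_l0_partition:
  assumes "l0_partition M A" and "\<And>k. AE w in M. w \<in> A k \<longrightarrow> Q w"
  shows "AE w in M. Q w"
proof -
  have "AE w in M. \<forall>k. w \<in> A k \<longrightarrow> Q w"
    unfolding AE_all_countable using assms(2) by blast
  then show ?thesis
    by (rule AE_mp) (rule AE_I2, use l0_partition_cover[OF assms(1)] in blast)
qed

lemma l0cc_eq:
  assumes "l0_partition M A" and "w \<in> A k"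
  shows "l0cc A r w = r k w"
proof -
  have "indicator (A j) w * r j w = (if j = k then r k w else 0)" for j
    using l0_partition_unique[OF assms(1) _ assms(2), of j] assms(2) by (cases "j = k") (auto simp: indicator_def)
  then have "(\<lambda>j. indicator (A j) w * r j w) = (\<lambda>j. if j = k then r k w else 0)"
    by blast
  then have "(\<lambda>j. indicator (A j) w * r j w) sums r k w"
    using sums_single[of k "\<lambda>_. r k w"] by simp
  then show ?thesis
    unfolding l0cc_def by (rule sums_unique[symmetric])
qed

lemma fcc_eq: "l0_partition M A \<Longrightarrow> w \<in> A k \<Longrightarrow> fcc A fs x w = fs k x w"
  unfolding fcc_def by (rule l0cc_eq)

lemma borel_measurable_l0cc:
  assumes "l0_partition M A" and "\<And>k. r k \<in> borel_measurable M"
  shows "l0cc A r \<in> borel_measurable M"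
  unfolding l0cc_def
  using assms l0_partition_sets[OF assms(1)] by (intro borel_measurable_suminf) auto

definition bipartition :: "'a measure \<Rightarrow> 'a set \<Rightarrow> nat \<Rightarrow> 'a set" where
  "bipartition M S = (\<lambda>k. if k = 0 then S else if k = 1 then space M - S else {})"

lemma l0_partition_bipartition: "S \<in> sets M \<Longrightarrow> l0_partition M (bipartition M S)"
  unfolding l0_partition_def bipartition_def disjoint_family_on_def
  using sets.sets_into_space[of S M] by (auto split: if_splits)

text \<open>Disjoint pieces of a sequence of events, completed by its complement as the piece \<open>0\<close>.\<close>

definition disjoint_partition :: "'a measure \<Rightarrow> (nat \<Rightarrow> 'a set) \<Rightarrow> nat \<Rightarrow> 'a set" where
  "disjoint_partition M T = disjointed (case_nat (space M - (\<Union>i. T i)) T)"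

lemma l0_partition_disjoint_partition:
  assumes "\<And>n. T n \<in> sets M"
  shows "l0_partition M (disjoint_partition M T)"
proof -
  define C where "C = case_nat (space M - (\<Union>i. T i)) T"
  have C_sets: "range C \<subseteq> sets M"
    unfolding C_def using assms by (auto split: nat.splits)
  have C_cover: "(\<Union>n. C n) = space M"
  proof
    show "(\<Union>n. C n) \<subseteq> space M"
      using C_sets sets.sets_into_space by blast
    show "space M \<subseteq> (\<Union>n. C n)"
    proof
      fix w assume "w \<in> space M"
      then have "w \<in> C 0 \<or> (\<exists>i. w \<in> C (Suc i))"
        unfolding C_def by auto
      then show "w \<in> (\<Union>n. C n)" by blast
    qed
  qed
  show ?thesis
    unfolding l0_partition_def disjoint_partition_def C_def[symmetric]
  proof (intro conjI allI)
    show "disjointed C k \<in> sets M" for k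
      using sets.range_disjointed_sets[OF C_sets] by blast
    show "disjoint_family (disjointed C)"
      by (rule disjoint_family_disjointed)
    show "(\<Union>k. disjointed C k) = space M"
      unfolding UN_disjointed_eq by (rule C_cover)
  qed
qed

lemma sets_disjointed: "(\<And>n. S n \<in> sets M) \<Longrightarrow> disjointed S n \<in> sets M"
  using sets.range_disjointed_sets[of S M] by blast

lemma disjoint_partition_0: "disjoint_partition M T 0 = space M - (\<Union>i. T i)"
  unfolding disjoint_partition_def by simp

lemma disjoint_partition_Suc:
  assumes "\<And>n. T n \<in> sets M"
  shows "disjoint_partition M T (Suc n) = disjointed T n"
  using sets.sets_into_space[OF assms]
  by (auto simp: disjoint_partition_def disjointed_def atLeast0LessThan lessThan_Suc_eq_insert_0
      split: nat.splits)

definition refine :: "(nat \<Rightarrow> 'a set) \<Rightarrow> (nat \<Rightarrow> nat \<Rightarrow> 'a set) \<Rightarrow> nat \<Rightarrow> 'a set" where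
  "refine A B = (\<lambda>m. case prod_decode m of (n, k) \<Rightarrow> A n \<inter> B n k)"

lemma refine_prod_encode [simp]: "refine A B (prod_encode (n, k)) = A n \<inter> B n k"
  unfolding refine_def by simp

lemma mem_refine: "w \<in> refine A B m \<Longrightarrow> prod_decode m = (n, k) \<Longrightarrow> w \<in> A n \<and> w \<in> B n k"
  unfolding refine_def by auto

lemma l0_partition_refine:
  assumes A: "l0_partition M A" and B: "\<And>n. l0_partition M (B n)"
  shows "l0_partition M (refine A B)"
  unfolding l0_partition_def
proof (intro conjI allI)
  show "refine A B m \<in> sets M" for m
    unfolding refine_def using l0_partition_sets[OF A] l0_partition_sets[OF B]
    by (auto split: prod.splits)
  show "disjoint_family (refine A B)"
    unfolding disjoint_family_on_def
  proof (intro ballI impI equals0I)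
    fix m m' w assume "m \<noteq> m'" and w: "w \<in> refine A B m \<inter> refine A B m'"
    obtain n k n' k' where d: "prod_decode m = (n, k)" "prod_decode m' = (n', k')"
      by (metis surj_pair)
    then have "(n, k) \<noteq> (n', k')"
      using \<open>m \<noteq> m'\<close> by (metis prod_decode_inverse)
    have w1: "w \<in> A n" "w \<in> B n k" and w2: "w \<in> A n'" "w \<in> B n' k'"
      using w mem_refine[of w A B m n k] mem_refine[of w A B m' n' k'] d by auto
    have "n' = n"
      by (rule l0_partition_unique[OF A w1(1) w2(1)])
    moreover have "k' = k"
      using l0_partition_unique[OF B w1(2)] w2(2) \<open>n' = n\<close> by simp
    ultimately show False
      using \<open>(n, k) \<noteq> (n', k')\<close> by simp
  qed
  show "(\<Union>m. refine A B m) = space M"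
  proof
    show "(\<Union>m. refine A B m) \<subseteq> space M"
      unfolding refine_def using l0_partition_subset_space[OF A] by (auto split: prod.splits)
    show "space M \<subseteq> (\<Union>m. refine A B m)"
    proof
      fix w assume w: "w \<in> space M"
      obtain n k where "w \<in> A n" "w \<in> B n k"
        using l0_partition_cover[OF A w] l0_partition_cover[OF B w] by blast
      then show "w \<in> (\<Union>m. refine A B m)"
        by (intro UN_I[of "prod_encode (n, k)"]) auto
    qed
  qed
qed

text \<open>Exhaustion: the union of a sequence whose measures approach the supremum.\<close>

lemma (in finite_measure) ex_ae_greatest_event:
  assumes sub: "\<S> \<subseteq> sets M" and ne: "\<S> \<noteq> {}"
    and un: "\<And>S::nat \<Rightarrow> 'a set. (\<And>n. S n \<in> \<S>) \<Longrightarrow> (\<Union>n. S n) \<in> \<S>"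
  shows "\<exists>S\<in>\<S>. \<forall>T\<in>\<S>. AE w in M. w \<in> T \<longrightarrow> w \<in> S"
proof -
  define c where "c = (SUP T\<in>\<S>. measure M T)"
  have bdd: "bdd_above (measure M ` \<S>)"
    by (rule bdd_aboveI[of _ "measure M (space M)"]) (use sub in \<open>auto intro: bounded_measure\<close>)
  have le_c: "measure M T \<le> c" if "T \<in> \<S>" for T
    unfolding c_def by (rule cSUP_upper[OF that bdd])
  have "\<exists>T\<in>\<S>. c - 1 / (real n + 1) < measure M T" for n
    unfolding c_def using less_cSUP_iff[OF ne bdd, of "c - 1 / (real n + 1)"] c_def by simp
  then obtain T where T: "\<And>n. T n \<in> \<S>" "\<And>n. c - 1 / (real n + 1) < measure M (T n)"
    by metis
  define S where "S = (\<Union>n. T n)"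
  have S: "S \<in> \<S>" and S_sets: "S \<in> sets M"
    unfolding S_def using un[OF T(1)] sub by auto
  have c_le: "c \<le> measure M S"
  proof (rule field_le_epsilon)
    fix e :: real assume "0 < e"
    then obtain n :: nat where "1 / (real n + 1) < e"
      by (metis nat_approx_posE of_nat_Suc add.commute)
    moreover have "measure M (T n) \<le> measure M S"
      unfolding S_def by (rule finite_measure_mono) (use S_sets S_def in auto)
    ultimately show "c \<le> measure M S + e"
      using T(2)[of n] by linarith
  qed
  have "AE w in M. w \<in> U \<longrightarrow> w \<in> S" if U: "U \<in> \<S>" for U
  proof -
    have U_sets: "U \<in> sets M" using U sub by blast
    define V where "V = (\<lambda>n::nat. if n = 0 then S else U)"
    have "(\<Union>n. V n) \<in> \<S>"
      using un[of V] S U unfolding V_def by auto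
    moreover have "(\<Union>n. V n) = S \<union> U"
      unfolding V_def by (auto split: if_splits)
    ultimately have "measure M S + measure M (U - S) \<le> c"
      using le_c[of "S \<union> U"] finite_measure_Union'[OF S_sets U_sets] by simp
    then have "measure M (U - S) = 0"
      using c_le measure_nonneg[of M "U - S"] by linarith
    then have "U - S \<in> null_sets M"
      using U_sets S_sets by (simp add: null_sets_def emeasure_eq_measure)
    then show ?thesis
      by (rule AE_mp[OF AE_not_in]) (intro AE_I2, blast)
  qed
  then show ?thesis using S by blast
qed

locale stable_module = prob_space P for P :: "'w measure" +
  fixes smul :: "('w \<Rightarrow> real) \<Rightarrow> 'e::ab_group_add \<Rightarrow> 'e"
  assumes stable_module: "stable_L0_module P smul"
begin

lemma smul_mult: "r \<in> L0 P \<Longrightarrow> s \<in> L0 P \<Longrightarrow> smul (\<lambda>w. r w * s w) x = smul r (smul s x)"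
  using stable_module unfolding stable_L0_module_def by blast

lemma smul_add_scalar: "r \<in> L0 P \<Longrightarrow> s \<in> L0 P \<Longrightarrow> smul (\<lambda>w. r w + s w) x = smul r x + smul s x"
  using stable_module unfolding stable_L0_module_def by blast

lemma ex1_concatenation:
  "l0_partition P A \<Longrightarrow> \<exists>!x. \<forall>k. smul (indicator (A k)) x = smul (indicator (A k)) (xs k)"
  using stable_module unfolding stable_L0_module_def by blast

lemma smul_indicator_empty [simp]: "smul (indicator {}) x = 0"
proof -
  have zero: "(\<lambda>w. 0::real) \<in> L0 P"
    unfolding L0_def by simp
  have "smul (\<lambda>w. 0 + 0) x = smul (\<lambda>w. 0) x + smul (\<lambda>w. 0) x"
    using smul_add_scalar[OF zero zero] .
  moreover have "(indicator {} :: 'w \<Rightarrow> real) = (\<lambda>w. 0)"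
    by (rule ext) simp
  ultimately show ?thesis
    by simp
qed

lemma smul_indicator_Int:
  assumes "S \<in> sets P" and "T \<in> sets P"
  shows "smul (indicator S) (smul (indicator T) x) = smul (indicator (S \<inter> T)) x"
proof -
  have "(\<lambda>w. indicator S w * indicator T w) = (indicator (S \<inter> T) :: 'w \<Rightarrow> real)"
    by (rule ext) (simp add: indicator_inter_arith)
  then show ?thesis
    using smul_mult[of "indicator S" "indicator T" x] assms by (simp add: L0_def)
qed

definition agree_on :: "'w set \<Rightarrow> 'e \<Rightarrow> 'e \<Rightarrow> bool" where
  "agree_on S a b \<longleftrightarrow> smul (indicator S) a = smul (indicator S) b"

lemma agree_on_refl [simp]: "agree_on S a a"
  unfolding agree_on_def by simp

lemma agree_on_sym: "agree_on S a b \<Longrightarrow> agree_on S b a"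
  unfolding agree_on_def by simp

lemma agree_on_trans: "agree_on S a b \<Longrightarrow> agree_on S b c \<Longrightarrow> agree_on S a c"
  unfolding agree_on_def by simp

lemma agree_on_subset:
  assumes "agree_on S a b" and "S \<in> sets P" and "T \<in> sets P" and "T \<subseteq> S"
  shows "agree_on T a b"
proof -
  have "smul (indicator T) x = smul (indicator T) (smul (indicator S) x)" for x
    using smul_indicator_Int[OF assms(3,2)] assms(4) by (simp add: Int_absorb2)
  then show ?thesis
    using assms(1) unfolding agree_on_def by metis
qed

lemma eq_if_agree_on_l0_partition:
  assumes "l0_partition P A" and "\<And>k. agree_on (A k) a b"
  shows "a = b"
  using ex1_concatenation[OF assms(1), of "\<lambda>k. a"] assms(2) unfolding agree_on_def by metis

lemma agree_on_mcc: "l0_partition P A \<Longrightarrow> agree_on (A k) (mcc smul A xs) (xs k)"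
  using theI'[OF ex1_concatenation] unfolding mcc_def agree_on_def by blast

lemma mcc_eqI:
  assumes "l0_partition P A" and "\<And>k. agree_on (A k) x (xs k)"
  shows "mcc smul A xs = x"
  unfolding mcc_def
  by (rule the1_equality[OF ex1_concatenation[OF assms(1)]]) (use assms(2) in \<open>auto simp: agree_on_def\<close>)

lemma mcc_const: "l0_partition P A \<Longrightarrow> mcc smul A (\<lambda>k. x) = x"
  by (rule mcc_eqI) auto

lemma agree_on_UN:
  fixes S :: "nat \<Rightarrow> 'w set"
  assumes S: "\<And>n. S n \<in> sets P" and agree: "\<And>n. agree_on (S n) a b"
  shows "agree_on (\<Union>n. S n) a b"
proof -
  define U where "U = (\<Union>n. S n)"
  define D where "D = disjoint_partition P S"
  have U: "U \<in> sets P"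
    unfolding U_def using S by blast
  have D: "l0_partition P D"
    unfolding D_def by (rule l0_partition_disjoint_partition[OF S])
  have "smul (indicator U) a = smul (indicator U) b"
  proof (rule eq_if_agree_on_l0_partition[OF D])
    fix k
    have Dk: "D k \<in> sets P"
      using l0_partition_sets[OF D] .
    have "smul (indicator (D k \<inter> U)) a = smul (indicator (D k \<inter> U)) b"
    proof (cases k)
      case 0
      then have "D k \<inter> U = {}"
        unfolding D_def U_def disjoint_partition_def by auto
      then show ?thesis by simp
    next
      case (Suc n)
      then have "D k = disjointed S n"
        unfolding D_def using disjoint_partition_Suc[OF S] by simp
      then have "D k \<subseteq> S n" and "D k \<inter> U = D k"
        unfolding U_def using disjointed_subset[of S n] by auto
      then show ?thesis
        using agree_on_subset[OF agree S Dk] unfolding agree_on_def by simp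
    qed
    then show "agree_on (D k) (smul (indicator U) a) (smul (indicator U) b)"
      unfolding agree_on_def using smul_indicator_Int[OF Dk U] by simp
  qed
  then show ?thesis
    unfolding agree_on_def U_def .
qed

lemma stable_set_nonempty: "stable_set P smul Q \<Longrightarrow> Q \<noteq> {}"
  unfolding stable_set_def by blast

lemma stable_set_mcc:
  "stable_set P smul Q \<Longrightarrow> l0_partition P A \<Longrightarrow> (\<And>k. xs k \<in> Q) \<Longrightarrow> mcc smul A xs \<in> Q"
  unfolding stable_set_def by blast

lemma stable_set_glue:
  assumes Q: "stable_set P smul Q" and T: "\<And>n. T n \<in> sets P" and a: "\<And>n. a n \<in> Q"
  shows "\<exists>z\<in>Q. \<forall>n. agree_on (disjointed T n) z (a n)"
proof -
  define xs where "xs = case_nat (a 0) a"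
  have D: "l0_partition P (disjoint_partition P T)"
    by (rule l0_partition_disjoint_partition[OF T])
  have "mcc smul (disjoint_partition P T) xs \<in> Q"
    by (rule stable_set_mcc[OF Q D]) (simp add: xs_def a split: nat.splits)
  moreover have "agree_on (disjointed T n) (mcc smul (disjoint_partition P T) xs) (a n)" for n
    using agree_on_mcc[OF D, of "Suc n" xs] unfolding disjoint_partition_Suc[OF T] xs_def by simp
  ultimately show ?thesis by blast
qed

lemma stable_set_glue2:
  assumes Q: "stable_set P smul Q" and S: "S \<in> sets P" and ab: "a \<in> Q" "b \<in> Q"
  shows "\<exists>z\<in>Q. agree_on S z a \<and> agree_on (space P - S) z b"
proof -
  define xs where "xs = (\<lambda>k::nat. if k = 0 then a else b)"
  have D: "l0_partition P (bipartition P S)"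
    by (rule l0_partition_bipartition[OF S])
  have "mcc smul (bipartition P S) xs \<in> Q"
    by (rule stable_set_mcc[OF Q D]) (simp add: xs_def ab)
  moreover have "agree_on S (mcc smul (bipartition P S) xs) a"
    using agree_on_mcc[OF D, of 0 xs] unfolding bipartition_def xs_def by simp
  moreover have "agree_on (space P - S) (mcc smul (bipartition P S) xs) b"
    using agree_on_mcc[OF D, of 1 xs] unfolding bipartition_def xs_def by simp
  ultimately show ?thesis by blast
qed

lemma stable_map_agree_on:
  assumes f: "stable_map P smul K f" and y: "y \<in> K" "y' \<in> K" and S: "S \<in> sets P"
    and agree: "agree_on S y y'"
  shows "AE w in P. w \<in> S \<longrightarrow> f y w = f y' w"
proof -
  define xs where "xs = (\<lambda>k::nat. if k = 0 then y' else y)"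
  have D: "l0_partition P (bipartition P S)"
    by (rule l0_partition_bipartition[OF S])
  have "mcc smul (bipartition P S) xs = y"
    by (rule mcc_eqI[OF D]) (use agree in \<open>auto simp: bipartition_def xs_def agree_on_sym\<close>)
  moreover have "\<forall>k. xs k \<in> K"
    using y unfolding xs_def by auto
  ultimately have "AE w in P. f y w = l0cc (bipartition P S) (\<lambda>k. f (xs k)) w"
    using f D unfolding stable_map_def eqae_def by metis
  then show ?thesis
  proof (rule AE_mp, intro AE_I2 impI)
    fix w assume "f y w = l0cc (bipartition P S) (\<lambda>k. f (xs k)) w" and "w \<in> S"
    moreover have "w \<in> bipartition P S 0"
      using \<open>w \<in> S\<close> unfolding bipartition_def by simp
    ultimately show "f y w = f y' w"
      using l0cc_eq[OF D] unfolding xs_def by simp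
  qed
qed

end

lemma abs_diff_triangle: "\<bar>(a::real) - b\<bar> \<le> \<bar>c - d\<bar> + \<bar>a - c\<bar> + \<bar>b - d\<bar>"
  by arith

lemma L0pp_measurable: "r \<in> L0pp P \<Longrightarrow> r \<in> borel_measurable P"
  unfolding L0pp_def L0_def by blast

lemma L0pp_AE_pos: "r \<in> L0pp P \<Longrightarrow> AE w in P. 0 < r w"
  unfolding L0pp_def by blast

lemma l0_open_l0_ball:
  assumes t: "t \<in> borel_measurable P" and r: "r \<in> L0pp P"
  shows "l0_open P (l0_ball P t r)"
  unfolding l0_open_def
proof (intro conjI ballI)
  show "l0_ball P t r \<subseteq> L0 P"
    unfolding l0_ball_def by blast
  fix s assume s: "s \<in> l0_ball P t r"
  then have s_meas: "s \<in> borel_measurable P" and s_near: "AE w in P. \<bar>s w - t w\<bar> < r w"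
    unfolding l0_ball_def L0_def ltae_def by auto
  define r' where "r' = (\<lambda>w. r w - \<bar>s w - t w\<bar>)"
  have r': "r' \<in> L0pp P"
    unfolding L0pp_def L0_def r'_def
    using s_meas t L0pp_measurable[OF r] s_near by (auto elim!: AE_mp intro!: AE_I2)
  have "s \<in> l0_ball P s r'"
    using s L0pp_AE_pos[OF r'] unfolding l0_ball_def ltae_def by (auto elim!: AE_mp intro!: AE_I2)
  moreover have "l0_ball P s r' \<subseteq> l0_ball P t r"
  proof
    fix u assume "u \<in> l0_ball P s r'"
    then have u: "u \<in> L0 P" and near: "AE w in P. \<bar>u w - s w\<bar> < r' w"
      unfolding l0_ball_def ltae_def by auto
    have "AE w in P. \<bar>u w - t w\<bar> < r w"
      using near by (rule AE_mp) (rule AE_I2, unfold r'_def, arith)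
    then show "u \<in> l0_ball P t r"
      unfolding l0_ball_def ltae_def using u by blast
  qed
  ultimately show "\<exists>t'\<in>L0 P. \<exists>r''\<in>L0pp P. s \<in> l0_ball P t' r'' \<and> l0_ball P t' r'' \<subseteq> l0_ball P t r"
    using s_meas r' unfolding L0_def by blast
qed

locale stable_function_family = stable_module P smul
  for P :: "'w measure" and smul :: "('w \<Rightarrow> real) \<Rightarrow> 'e::ab_group_add \<Rightarrow> 'e" +
  fixes X :: "'e topology" and F :: "('e \<Rightarrow> 'w \<Rightarrow> real) set"
  assumes stable_top_space: "stable_top_space P smul X"
    and stable_compact: "stable_compact P smul X"
    and stable_subset: "stable_subset_C P smul X F"
begin

abbreviation "K \<equiv> topspace X"

lemma K_stable: "stable_set P smul K"
  using stable_top_space unfolding stable_top_space_def by blast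

definition basis :: "'e set set" where
  "basis = (SOME B. is_base X B \<and> stable_coll P smul B)"

lemma basis: "is_base X basis" "stable_coll P smul basis"
  using someI_ex[of "\<lambda>B. is_base X B \<and> stable_coll P smul B"] stable_top_space
  unfolding stable_top_space_def basis_def by blast+

lemma basis_openin: "U \<in> basis \<Longrightarrow> openin X U"
  using basis(1) unfolding is_base_def by blast

lemma basis_stable: "U \<in> basis \<Longrightarrow> stable_set P smul U"
  using basis(2) unfolding stable_coll_def by blast

lemma basis_refines: "openin X U \<Longrightarrow> x \<in> U \<Longrightarrow> \<exists>V\<in>basis. x \<in> V \<and> V \<subseteq> U"
  using basis(1) unfolding is_base_def by blast

lemma F_measurable: "f \<in> F \<Longrightarrow> x \<in> K \<Longrightarrow> f x \<in> borel_measurable P"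
  using stable_subset unfolding stable_subset_C_def in_CKL0_def L0_def by blast

lemma F_openin_preimage: "f \<in> F \<Longrightarrow> l0_open P W \<Longrightarrow> openin X {x \<in> K. f x \<in> W}"
  using stable_subset unfolding stable_subset_C_def in_CKL0_def by blast

lemma F_nonempty: "F \<noteq> {}"
  using stable_subset unfolding stable_subset_C_def by blast

lemma F_agree_on:
  "f \<in> F \<Longrightarrow> y \<in> K \<Longrightarrow> y' \<in> K \<Longrightarrow> S \<in> sets P \<Longrightarrow> agree_on S y y' \<Longrightarrow>
    AE w in P. w \<in> S \<longrightarrow> f y w = f y' w"
  using stable_subset stable_map_agree_on unfolding stable_subset_C_def in_CKL0_def by blast

lemma F_glue:
  assumes A: "l0_partition P A" and fs: "\<And>k. fs k \<in> F"
  shows "\<exists>g\<in>F. \<forall>x\<in>K. \<forall>k. AE w in P. w \<in> A k \<longrightarrow> g x w = fs k x w"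
proof -
  obtain g where g: "g \<in> F" "\<forall>x\<in>K. eqae P (g x) (fcc A fs x)"
    using stable_subset A fs unfolding stable_subset_C_def by blast
  have "AE w in P. w \<in> A k \<longrightarrow> g x w = fs k x w" if x: "x \<in> K" for x k
  proof -
    have "AE w in P. g x w = fcc A fs x w"
      using g(2) x unfolding eqae_def by blast
    then show ?thesis
      by (rule AE_mp) (rule AE_I2, use fcc_eq[OF A] in auto)
  qed
  then show ?thesis
    using g(1) by blast
qed

lemma F_continuous_at:
  assumes f: "f \<in> F" and x: "x \<in> K" and r: "r \<in> L0pp P"
  shows "\<exists>U. openin X U \<and> x \<in> U \<and> (\<forall>y\<in>U. y \<in> K \<and> (AE w in P. \<bar>f y w - f x w\<bar> < r w))"
proof -
  let ?U = "{y \<in> K. f y \<in> l0_ball P (f x) r}"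
  have "openin X ?U"
    by (rule F_openin_preimage[OF f l0_open_l0_ball[OF F_measurable[OF f x] r]])
  moreover have "x \<in> ?U"
    unfolding l0_ball_def ltae_def using x F_measurable[OF f x] L0pp_AE_pos[OF r]
    by (auto simp: L0_def elim!: AE_mp intro!: AE_I2)
  ultimately show ?thesis
    unfolding l0_ball_def ltae_def by blast
qed

text \<open>The upward closure of a directed stable collection is a stable filter.\<close>

lemma ex_closure_point_directed:
  assumes C: "stable_coll P smul \<C>" and sub: "\<And>U. U \<in> \<C> \<Longrightarrow> U \<subseteq> K"
    and directed: "\<And>U V. U \<in> \<C> \<Longrightarrow> V \<in> \<C> \<Longrightarrow> \<exists>W\<in>\<C>. W \<subseteq> U \<inter> V"
  shows "\<exists>x\<in>K. \<forall>U\<in>\<C>. x \<in> X closure_of U"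
proof -
  have ne: "\<C> \<noteq> {}" and members_ne: "\<And>U. U \<in> \<C> \<Longrightarrow> U \<noteq> {}"
    using C unfolding stable_coll_def stable_set_def by blast+
  define FF where "FF = {U. U \<subseteq> K \<and> (\<exists>V\<in>\<C>. V \<subseteq> U)}"
  have "filter_on K FF"
    unfolding filter_on_def
  proof (intro conjI ballI allI impI)
    show "FF \<subseteq> Pow K" "{} \<notin> FF"
      unfolding FF_def using members_ne by blast+
    show "K \<in> FF"
      unfolding FF_def using ne sub by blast
    show "V \<in> FF" if "U \<in> FF" "U \<subseteq> V \<and> V \<subseteq> K" for U V
      using that unfolding FF_def by blast
    show "U \<inter> V \<in> FF" if UV: "U \<in> FF" "V \<in> FF" for U V
    proof -
      obtain U' V' where "U' \<in> \<C>" "U' \<subseteq> U" "V' \<in> \<C>" "V' \<subseteq> V" "U \<subseteq> K"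
        using UV unfolding FF_def by blast
      moreover obtain W where "W \<in> \<C>" "W \<subseteq> U' \<inter> V'"
        using directed[OF \<open>U' \<in> \<C>\<close> \<open>V' \<in> \<C>\<close>] by blast
      ultimately show ?thesis
        unfolding FF_def by blast
    qed
  qed
  moreover have "\<C> \<subseteq> FF"
    unfolding FF_def using sub by blast
  ultimately have "stable_filter P smul K FF"
    unfolding stable_filter_def using C unfolding FF_def by blast
  then obtain x where "x \<in> K" "\<forall>U\<in>FF. x \<in> X closure_of U"
    using stable_compact unfolding stable_compact_def by blast
  then show ?thesis
    using \<open>\<C> \<subseteq> FF\<close> by blast
qed

section \<open>The supremum metric is attained\<close>

definition local_map :: "('e \<Rightarrow> 'w \<Rightarrow> real) \<Rightarrow> bool" where
  "local_map h \<longleftrightarrow> (\<forall>y\<in>K. \<forall>y'\<in>K. \<forall>S\<in>sets P. agree_on S y y' \<longrightarrow>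
     (AE w in P. w \<in> S \<longrightarrow> h y w = h y' w))"

lemma local_mapD:
  "local_map h \<Longrightarrow> y \<in> K \<Longrightarrow> y' \<in> K \<Longrightarrow> S \<in> sets P \<Longrightarrow> agree_on S y y' \<Longrightarrow>
    AE w in P. w \<in> S \<longrightarrow> h y w = h y' w"
  unfolding local_map_def by blast

lemma local_map_abs_diff:
  assumes "f \<in> F" and "g \<in> F"
  shows "local_map (\<lambda>x w. \<bar>f x w - g x w\<bar>)"
  unfolding local_map_def
proof (intro ballI impI)
  fix y y' S assume "y \<in> K" "y' \<in> K" "S \<in> sets P" "agree_on S y y'"
  from F_agree_on[OF assms(1) this] F_agree_on[OF assms(2) this]
  show "AE w in P. w \<in> S \<longrightarrow> \<bar>f y w - g y w\<bar> = \<bar>f y' w - g y' w\<bar>"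
    by eventually_elim auto
qed

definition upper_set :: "('e \<Rightarrow> 'w \<Rightarrow> real) \<Rightarrow> 'e \<Rightarrow> 'e set" where
  "upper_set h y = {x \<in> K. leae P (h y) (h x)}"

lemma upper_set_mcc:
  assumes h: "local_map h" and A: "l0_partition P A"
    and xs: "\<And>k. xs k \<in> upper_set h (ys k)" and ys: "\<And>k. ys k \<in> K"
  shows "mcc smul A xs \<in> upper_set h (mcc smul A ys)"
proof -
  have xsK: "xs k \<in> K" for k
    using xs unfolding upper_set_def by blast
  have xK: "mcc smul A xs \<in> K" and yK: "mcc smul A ys \<in> K"
    using stable_set_mcc[OF K_stable A] xsK ys by blast+
  have "AE w in P. h (mcc smul A ys) w \<le> h (mcc smul A xs) w"
  proof (rule AE_l0_partition[OF A])
    fix k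
    have "AE w in P. w \<in> A k \<longrightarrow> h (mcc smul A xs) w = h (xs k) w"
      by (rule local_mapD[OF h xK xsK l0_partition_sets[OF A] agree_on_mcc[OF A]])
    moreover have "AE w in P. w \<in> A k \<longrightarrow> h (mcc smul A ys) w = h (ys k) w"
      by (rule local_mapD[OF h yK ys l0_partition_sets[OF A] agree_on_mcc[OF A]])
    moreover have "AE w in P. h (ys k) w \<le> h (xs k) w"
      using xs[of k] unfolding upper_set_def leae_def by blast
    ultimately show "AE w in P. w \<in> A k \<longrightarrow> h (mcc smul A ys) w \<le> h (mcc smul A xs) w"
      by eventually_elim auto
  qed
  then show ?thesis
    unfolding upper_set_def leae_def using xK by blast
qed

lemma cc_sets_upper_set:
  assumes h: "local_map h" and A: "l0_partition P A" and ys: "\<And>k. ys k \<in> K"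
  shows "cc_sets smul A (\<lambda>k. upper_set h (ys k)) = upper_set h (mcc smul A ys)"
proof
  show "cc_sets smul A (\<lambda>k. upper_set h (ys k)) \<subseteq> upper_set h (mcc smul A ys)"
  proof
    fix x assume "x \<in> cc_sets smul A (\<lambda>k. upper_set h (ys k))"
    then obtain xs where "x = mcc smul A xs" "\<And>k. xs k \<in> upper_set h (ys k)"
      unfolding cc_sets_def by blast
    then show "x \<in> upper_set h (mcc smul A ys)"
      using upper_set_mcc[OF h A, of xs ys] ys by blast
  qed
  show "upper_set h (mcc smul A ys) \<subseteq> cc_sets smul A (\<lambda>k. upper_set h (ys k))"
  proof
    fix x assume x: "x \<in> upper_set h (mcc smul A ys)"
    have xK: "x \<in> K"
      using x unfolding upper_set_def by blast
    have yK: "mcc smul A ys \<in> K"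
      by (rule stable_set_mcc[OF K_stable A ys])
    have "\<forall>k. \<exists>z\<in>K. agree_on (A k) z x \<and> agree_on (space P - A k) z (ys k)"
      using stable_set_glue2[OF K_stable l0_partition_sets[OF A] xK ys] by blast
    then obtain xs where xs: "\<And>k. xs k \<in> K" "\<And>k. agree_on (A k) (xs k) x"
      "\<And>k. agree_on (space P - A k) (xs k) (ys k)"
      by metis
    have "xs k \<in> upper_set h (ys k)" for k
    proof -
      have Ak: "A k \<in> sets P"
        using l0_partition_sets[OF A] .
      have "AE w in P. w \<in> A k \<longrightarrow> h (xs k) w = h x w"
        by (rule local_mapD[OF h xs(1) xK Ak xs(2)])
      moreover have "AE w in P. w \<in> space P - A k \<longrightarrow> h (xs k) w = h (ys k) w"
        by (rule local_mapD[OF h xs(1) ys _ xs(3)]) (use Ak in auto)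
      moreover have "AE w in P. w \<in> A k \<longrightarrow> h (mcc smul A ys) w = h (ys k) w"
        by (rule local_mapD[OF h yK ys Ak agree_on_mcc[OF A]])
      moreover have "AE w in P. h (mcc smul A ys) w \<le> h x w"
        using x unfolding upper_set_def leae_def by blast
      moreover have "AE w in P. w \<in> space P"
        by (rule AE_I2) simp
      ultimately have "AE w in P. h (ys k) w \<le> h (xs k) w"
        by eventually_elim auto
      then show ?thesis
        unfolding upper_set_def leae_def using xs(1) by blast
    qed
    moreover have "mcc smul A xs = x"
      by (rule mcc_eqI[OF A]) (rule agree_on_sym[OF xs(2)])
    ultimately show "x \<in> cc_sets smul A (\<lambda>k. upper_set h (ys k))"
      unfolding cc_sets_def by blast
  qed
qed

lemma stable_coll_upper_sets:
  assumes h: "local_map h"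
  shows "stable_coll P smul (upper_set h ` K)"
  unfolding stable_coll_def
proof (intro conjI ballI allI impI)
  show "upper_set h ` K \<noteq> {}"
    using stable_set_nonempty[OF K_stable] by blast
  show "stable_set P smul S" if S: "S \<in> upper_set h ` K" for S
  proof -
    obtain y where y: "y \<in> K" "S = upper_set h y"
      using S by blast
    have "y \<in> upper_set h y"
      using y(1) unfolding upper_set_def leae_def by simp
    moreover have "mcc smul A xs \<in> upper_set h y"
      if "l0_partition P A" "\<And>k. xs k \<in> upper_set h y" for A xs
      using upper_set_mcc[OF h that(1), of xs "\<lambda>k. y"] that y(1) mcc_const[OF that(1)] by simp
    ultimately show ?thesis
      unfolding stable_set_def y(2) by blast
  qed
  fix A :: "nat \<Rightarrow> 'w set" and Ys :: "nat \<Rightarrow> 'e set"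
  assume a: "l0_partition P A \<and> (\<forall>k. Ys k \<in> upper_set h ` K)"
  then have "\<forall>k. \<exists>y\<in>K. Ys k = upper_set h y"
    by blast
  then obtain ys where ys: "\<And>k. ys k \<in> K" and Ys: "Ys = (\<lambda>k. upper_set h (ys k))"
    by metis
  have "mcc smul A ys \<in> K"
    using stable_set_mcc[OF K_stable] a ys by blast
  then show "cc_sets smul A Ys \<in> upper_set h ` K"
    unfolding Ys cc_sets_upper_set[OF h conjunct1[OF a] ys] by blast
qed

lemma upper_set_directed:
  assumes meas: "\<And>x. x \<in> K \<Longrightarrow> h x \<in> borel_measurable P" and h: "local_map h"
    and y: "y \<in> K" and z: "z \<in> K"
  shows "\<exists>u\<in>K. upper_set h u \<subseteq> upper_set h y \<inter> upper_set h z"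
proof -
  define S where "S = {w \<in> space P. h z w \<le> h y w}"
  have S: "S \<in> sets P"
    unfolding S_def using meas[OF y] meas[OF z] by measurable
  txt \<open>\<open>h u\<close> is the pointwise maximum of \<open>h y\<close> and \<open>h z\<close>.\<close>
  obtain u where u: "u \<in> K" "agree_on S u y" "agree_on (space P - S) u z"
    using stable_set_glue2[OF K_stable S y z] by blast
  have uy: "AE w in P. w \<in> S \<longrightarrow> h u w = h y w"
    by (rule local_mapD[OF h u(1) y S u(2)])
  have uz: "AE w in P. w \<in> space P - S \<longrightarrow> h u w = h z w"
    by (rule local_mapD[OF h u(1) z _ u(3)]) (use S in auto)
  have "upper_set h u \<subseteq> upper_set h y \<inter> upper_set h z"
  proof
    fix x assume x: "x \<in> upper_set h u"
    then have ux: "AE w in P. h u w \<le> h x w"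
      unfolding upper_set_def leae_def by blast
    have space: "AE w in P. w \<in> space P"
      by (rule AE_I2) simp
    have "AE w in P. h y w \<le> h x w" and "AE w in P. h z w \<le> h x w"
      using uy uz ux space by (eventually_elim, auto simp: S_def)+
    then show "x \<in> upper_set h y \<inter> upper_set h z"
      using x unfolding upper_set_def leae_def by blast
  qed
  then show ?thesis
    using u(1) by blast
qed

lemma ex_ae_maximum:
  assumes meas: "\<And>x. x \<in> K \<Longrightarrow> h x \<in> borel_measurable P" and h: "local_map h"
    and closed: "\<And>y. y \<in> K \<Longrightarrow> closedin X (upper_set h y)"
  shows "\<exists>x\<in>K. \<forall>y\<in>K. leae P (h y) (h x)"
proof -
  have "\<exists>x\<in>K. \<forall>U\<in>upper_set h ` K. x \<in> X closure_of U"
  proof (rule ex_closure_point_directed[OF stable_coll_upper_sets[OF h]])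
    show "U \<subseteq> K" if "U \<in> upper_set h ` K" for U
      using that unfolding upper_set_def by blast
    show "\<exists>W\<in>upper_set h ` K. W \<subseteq> U \<inter> V"
      if UV: "U \<in> upper_set h ` K" "V \<in> upper_set h ` K" for U V
    proof -
      obtain y z where "y \<in> K" "z \<in> K" "U = upper_set h y" "V = upper_set h z"
        using UV by blast
      then show ?thesis
        using upper_set_directed[OF meas h, of y z] by blast
    qed
  qed
  then obtain x where x: "x \<in> K" "\<And>y. y \<in> K \<Longrightarrow> x \<in> X closure_of (upper_set h y)"
    by blast
  have "x \<in> upper_set h y" if "y \<in> K" for y
    using x(2)[OF that] closure_of_closedin[OF closed[OF that]] by simp
  then show ?thesis
    using x(1) unfolding upper_set_def by blast
qed

lemma closedin_abs_diff_ge: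
  assumes f: "f \<in> F" and g: "g \<in> F" and c: "c \<in> borel_measurable P"
  shows "closedin X {x \<in> K. leae P c (\<lambda>w. \<bar>f x w - g x w\<bar>)}"
  unfolding closedin_def
proof (intro conjI)
  let ?C = "{x \<in> K. leae P c (\<lambda>w. \<bar>f x w - g x w\<bar>)}"
  show "?C \<subseteq> K" by blast
  show "openin X (K - ?C)"
  proof (subst openin_subopen, intro ballI)
    fix x assume "x \<in> K - ?C"
    then have x: "x \<in> K" and not_le: "\<not> (AE w in P. c w \<le> \<bar>f x w - g x w\<bar>)"
      unfolding leae_def by auto
    txt \<open>Half the gap \<open>c - |f x - g x|\<close> where it is positive: within this distance of \<open>f x\<close>
      and \<open>g x\<close>, the inequality \<open>c \<le> |f y - g y|\<close> still fails on the same event.\<close>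
    define d where "d = (\<lambda>w. if \<bar>f x w - g x w\<bar> < c w then (c w - \<bar>f x w - g x w\<bar>) / 2 else 1)"
    have d: "d \<in> L0pp P"
      unfolding L0pp_def L0_def d_def using F_measurable[OF f x] F_measurable[OF g x] c by auto
    obtain U1 where U1: "openin X U1" "x \<in> U1" "\<forall>y\<in>U1. y \<in> K \<and> (AE w in P. \<bar>f y w - f x w\<bar> < d w)"
      using F_continuous_at[OF f x d] by blast
    obtain U2 where U2: "openin X U2" "x \<in> U2" "\<forall>y\<in>U2. y \<in> K \<and> (AE w in P. \<bar>g y w - g x w\<bar> < d w)"
      using F_continuous_at[OF g x d] by blast
    have "U1 \<inter> U2 \<subseteq> K - ?C"
    proof
      fix y assume y: "y \<in> U1 \<inter> U2"
      have "\<not> (AE w in P. c w \<le> \<bar>f y w - g y w\<bar>)"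
      proof
        assume "AE w in P. c w \<le> \<bar>f y w - g y w\<bar>"
        moreover have "AE w in P. \<bar>f y w - f x w\<bar> < d w" "AE w in P. \<bar>g y w - g x w\<bar> < d w"
          using U1 U2 y by blast+
        ultimately have "AE w in P. c w \<le> \<bar>f x w - g x w\<bar>"
        proof eventually_elim
          case (elim w)
          show ?case
          proof (rule ccontr)
            assume gap: "\<not> c w \<le> \<bar>f x w - g x w\<bar>"
            then have "2 * d w = c w - \<bar>f x w - g x w\<bar>"
              unfolding d_def by simp
            then show False
              using elim gap abs_diff_triangle[of "f y w" "g y w" "f x w" "g x w"] by linarith
          qed
        qed
        then show False
          using not_le by blast
      qed
      then show "y \<in> K - ?C"
        using y U1 unfolding leae_def by blast
    qed
    then show "\<exists>T. openin X T \<and> x \<in> T \<and> T \<subseteq> K - ?C"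
      using U1 U2 by (intro exI[of _ "U1 \<inter> U2"]) auto
  qed
qed

lemma dinf_attained:
  assumes f: "f \<in> F" and g': "g' \<in> F" and g_ae: "\<forall>x\<in>K. eqae P (g x) (g' x)"
  shows "\<exists>x\<in>K. dinf P X f g = (\<lambda>w. \<bar>f x w - g x w\<bar>)"
    and "\<forall>y\<in>K. leae P (\<lambda>w. \<bar>f y w - g y w\<bar>) (dinf P X f g)"
proof -
  define h where "h = (\<lambda>x w. \<bar>f x w - g' x w\<bar>)"
  have meas: "h x \<in> borel_measurable P" if "x \<in> K" for x
    unfolding h_def using F_measurable[OF f that] F_measurable[OF g' that] by measurable
  obtain x where x: "x \<in> K" "\<forall>y\<in>K. leae P (h y) (h x)"
  proof -
    have "\<exists>x\<in>K. \<forall>y\<in>K. leae P (h y) (h x)"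
    proof (rule ex_ae_maximum[OF meas])
      show "local_map h"
        unfolding h_def by (rule local_map_abs_diff[OF f g'])
      show "closedin X (upper_set h y)" if "y \<in> K" for y
        unfolding upper_set_def h_def by (rule closedin_abs_diff_ge[OF f g' meas[OF that, unfolded h_def]])
    qed
    then show ?thesis
      using that by blast
  qed
  let ?Q = "\<lambda>m. \<exists>x\<in>K. m = (\<lambda>w. \<bar>f x w - g x w\<bar>) \<and> (\<forall>y\<in>K. leae P (\<lambda>w. \<bar>f y w - g y w\<bar>) m)"
  have "?Q (\<lambda>w. \<bar>f x w - g x w\<bar>)"
  proof (intro bexI[OF _ x(1)] conjI ballI refl)
    fix y assume y: "y \<in> K"
    have "AE w in P. g y w = g' y w" "AE w in P. g x w = g' x w"
      using g_ae y x(1) unfolding eqae_def by auto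
    moreover have "AE w in P. h y w \<le> h x w"
      using x(2) y unfolding leae_def by blast
    ultimately show "leae P (\<lambda>w. \<bar>f y w - g y w\<bar>) (\<lambda>w. \<bar>f x w - g x w\<bar>)"
      unfolding leae_def h_def by eventually_elim auto
  qed
  then have "\<exists>m. ?Q m"
    by blast
  then have "?Q (SOME m. ?Q m)"
    by (rule someI_ex)
  then have "?Q (dinf P X f g)"
    unfolding dinf_def .
  then show "\<exists>x\<in>K. dinf P X f g = (\<lambda>w. \<bar>f x w - g x w\<bar>)"
    and "\<forall>y\<in>K. leae P (\<lambda>w. \<bar>f y w - g y w\<bar>) (dinf P X f g)"
    by blast+
qed

end

section \<open>Totally bounded families are bounded and equicontinuous\<close>

context stable_function_family
begin

lemma stable_finite_piecewise:
  assumes "stable_finite P F N"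
  obtains A Y where "l0_partition P A" "\<And>k. finite (Y k)" "\<And>k. Y k \<subseteq> F"
    "\<And>g. g \<in> N \<Longrightarrow> \<exists>B zs. (\<forall>k. l0_partition P (B k)) \<and> (\<forall>k j. zs k j \<in> Y k) \<and>
        (\<forall>x k j w. w \<in> A k \<longrightarrow> w \<in> B k j \<longrightarrow> g x w = zs k j x w)"
proof -
  obtain A Y where A: "l0_partition P A" and Y: "\<forall>k. finite (Y k) \<and> Y k \<noteq> {} \<and> Y k \<subseteq> F"
    and N: "N = {fcc A ys | ys. \<forall>k. ys k \<in> stF P (Y k)}"
    using assms unfolding stable_finite_def by blast
  have "\<exists>B zs. (\<forall>k. l0_partition P (B k)) \<and> (\<forall>k j. zs k j \<in> Y k) \<and>
      (\<forall>x k j w. w \<in> A k \<longrightarrow> w \<in> B k j \<longrightarrow> g x w = zs k j x w)" if "g \<in> N" for g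
  proof -
    obtain ys where ys: "\<forall>k. ys k \<in> stF P (Y k)" and g: "g = fcc A ys"
      using \<open>g \<in> N\<close> N by blast
    have "\<forall>k. \<exists>B zs. l0_partition P B \<and> (\<forall>j. zs j \<in> Y k) \<and> ys k = fcc B zs"
      using ys unfolding stF_def by blast
    then obtain B zs where B: "\<And>k. l0_partition P (B k)" and zs: "\<And>k j. zs k j \<in> Y k"
      and ys_eq: "\<And>k. ys k = fcc (B k) (zs k)"
      by metis
    have "g x w = zs k j x w" if "w \<in> A k" "w \<in> B k j" for x k j w
    proof -
      have "g x w = ys k x w"
        unfolding g by (rule fcc_eq[OF A that(1)])
      also have "\<dots> = zs k j x w"
        unfolding ys_eq by (rule fcc_eq[OF B that(2)])
      finally show ?thesis .
    qed
    then show ?thesis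
      using B zs by blast
  qed
  moreover have "finite (Y k)" "Y k \<subseteq> F" for k
    using Y by blast+
  ultimately show ?thesis
    using that[OF A] by blast
qed

lemma stable_finite_ae_in_F:
  assumes "stable_finite P F N" and "g \<in> N"
  shows "\<exists>g'\<in>F. \<forall>x\<in>K. eqae P (g x) (g' x)"
proof -
  obtain A Y B zs where A: "l0_partition P A" and Y: "\<And>k. Y k \<subseteq> F"
    and B: "\<And>k. l0_partition P (B k)" and zs: "\<And>k j. zs k j \<in> Y k"
    and g: "\<And>x k j w. w \<in> A k \<Longrightarrow> w \<in> B k j \<Longrightarrow> g x w = zs k j x w"
    using stable_finite_piecewise[OF assms(1)] assms(2) by metis
  define fs where "fs m = (case prod_decode m of (k, j) \<Rightarrow> zs k j)" for m
  have C: "l0_partition P (refine A B)"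
    by (rule l0_partition_refine[OF A B])
  obtain g' where g': "g' \<in> F" "\<forall>x\<in>K. \<forall>m. AE w in P. w \<in> refine A B m \<longrightarrow> g' x w = fs m x w"
    using F_glue[OF C, of fs] zs Y unfolding fs_def by (force split: prod.splits)
  have "eqae P (g x) (g' x)" if x: "x \<in> K" for x
    unfolding eqae_def
  proof (rule AE_l0_partition[OF C])
    fix m
    obtain k j where d: "prod_decode m = (k, j)"
      by (metis surj_pair)
    have "AE w in P. w \<in> refine A B m \<longrightarrow> g' x w = fs m x w"
      using g'(2) x by blast
    then show "AE w in P. w \<in> refine A B m \<longrightarrow> g x w = g' x w"
      by eventually_elim (auto dest!: mem_refine[OF _ d] simp: g fs_def d)
  qed
  then show ?thesis
    using g'(1) by blast
qed

lemma stable_finite_bounded: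
  assumes N: "stable_finite P F N" and x: "x \<in> K"
  shows "\<exists>R\<in>L0 P. \<forall>g\<in>N. AE w in P. \<bar>g x w\<bar> \<le> R w"
proof -
  obtain A Y where A: "l0_partition P A" and Y: "\<And>k. finite (Y k)" "\<And>k. Y k \<subseteq> F"
    and piecewise: "\<And>g. g \<in> N \<Longrightarrow> \<exists>B zs. (\<forall>k. l0_partition P (B k)) \<and> (\<forall>k j. zs k j \<in> Y k) \<and>
        (\<forall>x k j w. w \<in> A k \<longrightarrow> w \<in> B k j \<longrightarrow> g x w = zs k j x w)"
    using stable_finite_piecewise[OF N] by metis
  define R where "R = l0cc A (\<lambda>k w. Max ((\<lambda>h. \<bar>h x w\<bar>) ` Y k))"
  have "R \<in> L0 P"
    unfolding R_def L0_def
  proof (intro borel_measurable_l0cc[OF A] borel_measurable_Max[OF Y(1)])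
    fix k h assume "h \<in> Y k"
    then have "h x \<in> borel_measurable P"
      using Y(2) F_measurable[OF _ x] by blast
    then show "(\<lambda>w. \<bar>h x w\<bar>) \<in> borel_measurable P"
      by measurable
  qed
  moreover have "AE w in P. \<bar>g x w\<bar> \<le> R w" if g: "g \<in> N" for g
  proof -
    obtain B zs where B: "\<And>k. l0_partition P (B k)" and zs: "\<And>k j. zs k j \<in> Y k"
      and g_eq: "\<And>x k j w. w \<in> A k \<Longrightarrow> w \<in> B k j \<Longrightarrow> g x w = zs k j x w"
      using piecewise[OF g] by metis
    show ?thesis
    proof (rule AE_l0_partition[OF l0_partition_refine[OF A B]])
      fix m
      obtain k j where d: "prod_decode m = (k, j)"
        by (metis surj_pair)
      show "AE w in P. w \<in> refine A B m \<longrightarrow> \<bar>g x w\<bar> \<le> R w"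
      proof (rule AE_I2, intro impI)
        fix w assume "w \<in> refine A B m"
        then have w: "w \<in> A k" "w \<in> B k j"
          using mem_refine[of w A B m k j] d by auto
        have "\<bar>zs k j x w\<bar> \<le> Max ((\<lambda>h. \<bar>h x w\<bar>) ` Y k)"
          by (rule Max_ge[OF finite_imageI[OF Y(1)] imageI[OF zs]])
        then show "\<bar>g x w\<bar> \<le> R w"
          using l0cc_eq[OF A w(1), of "\<lambda>k w. Max ((\<lambda>h. \<bar>h x w\<bar>) ` Y k)"] g_eq[OF w, of x]
          by (simp add: R_def)
      qed
    qed
  qed
  ultimately show ?thesis
    by blast
qed

lemma pointwise_bounded_if_totally_bounded:
  assumes tb: "stable_totally_bounded P X F"
  shows "pointwise_bounded P X F"
  unfolding pointwise_bounded_def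
proof
  fix x assume x: "x \<in> K"
  have "(\<lambda>w. 1::real) \<in> L0pp P"
    unfolding L0pp_def L0_def by simp
  then obtain N where N: "stable_finite P F N" and net: "\<forall>f\<in>F. \<exists>g\<in>N. ltae P (dinf P X f g) (\<lambda>w. 1)"
    using tb unfolding stable_totally_bounded_def by blast
  obtain R where R: "R \<in> L0 P" and bound: "\<forall>g\<in>N. AE w in P. \<bar>g x w\<bar> \<le> R w"
    using stable_finite_bounded[OF N x] by blast
  have "leae P (\<lambda>w. \<bar>f x w\<bar>) (\<lambda>w. R w + 1)" if f: "f \<in> F" for f
  proof -
    obtain g where g: "g \<in> N" "AE w in P. dinf P X f g w < 1"
      using net f unfolding ltae_def by blast
    obtain g' where g': "g' \<in> F" "\<forall>x\<in>K. eqae P (g x) (g' x)"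
      using stable_finite_ae_in_F[OF N g(1)] by blast
    have "AE w in P. \<bar>f x w - g x w\<bar> \<le> dinf P X f g w"
      using dinf_attained(2)[OF f g'] x unfolding leae_def by blast
    moreover have "AE w in P. \<bar>g x w\<bar> \<le> R w"
      using bound g(1) by blast
    ultimately show ?thesis
      using g(2) unfolding leae_def by eventually_elim arith
  qed
  moreover have "(\<lambda>w. R w + 1) \<in> L0 P"
    using R unfolding L0_def by (intro borel_measurable_add borel_measurable_const)
  ultimately show "\<exists>rx\<in>L0 P. \<forall>f\<in>F. leae P (\<lambda>w. \<bar>f x w\<bar>) rx"
    by blast
qed

text \<open>Concatenating basic neighbourhoods along the partition gives a basic neighbourhood.\<close>

lemma piecewise_finite_equicontinuous:
  assumes x: "x \<in> K" and r: "r \<in> L0pp P" and A: "l0_partition P A"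
    and Y: "\<And>k. finite (Y k)" "\<And>k. Y k \<subseteq> F"
  shows "\<exists>U. openin X U \<and> x \<in> U \<and> (\<forall>y\<in>U. \<forall>k. \<forall>h\<in>Y k. AE w in P. w \<in> A k \<longrightarrow> \<bar>h y w - h x w\<bar> < r w)"
proof -
  have "\<forall>h\<in>F. \<exists>U. openin X U \<and> x \<in> U \<and> (\<forall>y\<in>U. y \<in> K \<and> (AE w in P. \<bar>h y w - h x w\<bar> < r w))"
    using F_continuous_at[OF _ x r] by blast
  then obtain nbhd where nbhd: "\<And>h. h \<in> F \<Longrightarrow> openin X (nbhd h) \<and> x \<in> nbhd h \<and>
      (\<forall>y\<in>nbhd h. y \<in> K \<and> (AE w in P. \<bar>h y w - h x w\<bar> < r w))"
    by metis
  define W where "W k = (\<Inter>h\<in>Y k. nbhd h) \<inter> K" for k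
  have "openin X (W k)" for k
    unfolding W_def by (rule openin_INT[OF Y(1)]) (use nbhd Y(2) in blast)
  moreover have "x \<in> W k" for k
    unfolding W_def using nbhd Y(2) x by blast
  ultimately have "\<exists>V\<in>basis. x \<in> V \<and> V \<subseteq> W k" for k
    by (rule basis_refines)
  then obtain V where V: "\<And>k. V k \<in> basis" "\<And>k. x \<in> V k" "\<And>k. V k \<subseteq> W k"
    by metis
  define U where "U = cc_sets smul A V"
  have "U \<in> basis"
    unfolding U_def using basis(2) A V(1) unfolding stable_coll_def by blast
  then have U: "openin X U"
    by (rule basis_openin)
  have "x \<in> U"
    unfolding U_def cc_sets_def using mcc_const[OF A, of x] V(2) by force
  moreover have "AE w in P. w \<in> A k \<longrightarrow> \<bar>h y w - h x w\<bar> < r w"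
    if y: "y \<in> U" and h: "h \<in> Y k" for y k h
  proof -
    obtain ys where ys: "y = mcc smul A ys" "\<And>k. ys k \<in> V k"
      using y unfolding U_def cc_sets_def by blast
    have "ys k \<in> nbhd h"
      using V(3) ys(2) h unfolding W_def by blast
    then have "ys k \<in> K" and near: "AE w in P. \<bar>h (ys k) w - h x w\<bar> < r w"
      using nbhd h Y(2) by blast+
    moreover have "AE w in P. w \<in> A k \<longrightarrow> h y w = h (ys k) w"
      using F_agree_on[of h y "ys k" "A k"] openin_subset[OF U] y h Y(2) \<open>ys k \<in> K\<close>
        l0_partition_sets[OF A] agree_on_mcc[OF A] ys(1) by blast
    ultimately show ?thesis
      by eventually_elim auto
  qed
  ultimately show ?thesis
    using U by blast
qed

lemma stable_finite_equicontinuous: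
  assumes N: "stable_finite P F N" and x: "x \<in> K" and r: "r \<in> L0pp P"
  shows "\<exists>U. openin X U \<and> x \<in> U \<and> (\<forall>y\<in>U. \<forall>g\<in>N. AE w in P. \<bar>g x w - g y w\<bar> < r w)"
proof -
  obtain A Y where A: "l0_partition P A" and Y: "\<And>k. finite (Y k)" "\<And>k. Y k \<subseteq> F"
    and piecewise: "\<And>g. g \<in> N \<Longrightarrow> \<exists>B zs. (\<forall>k. l0_partition P (B k)) \<and> (\<forall>k j. zs k j \<in> Y k) \<and>
        (\<forall>x k j w. w \<in> A k \<longrightarrow> w \<in> B k j \<longrightarrow> g x w = zs k j x w)"
    using stable_finite_piecewise[OF N] by metis
  have "\<exists>U. openin X U \<and> x \<in> U \<and>
      (\<forall>y\<in>U. \<forall>k. \<forall>h\<in>Y k. AE w in P. w \<in> A k \<longrightarrow> \<bar>h y w - h x w\<bar> < r w)"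
    by (rule piecewise_finite_equicontinuous[OF x r A]) (use Y in auto)
  then obtain U where U: "openin X U" "x \<in> U"
    and equi: "\<forall>y\<in>U. \<forall>k. \<forall>h\<in>Y k. AE w in P. w \<in> A k \<longrightarrow> \<bar>h y w - h x w\<bar> < r w"
    by blast
  have "AE w in P. \<bar>g x w - g y w\<bar> < r w" if y: "y \<in> U" and g: "g \<in> N" for y g
  proof -
    obtain B zs where B: "\<And>k. l0_partition P (B k)" and zs: "\<And>k j. zs k j \<in> Y k"
      and g_eq: "\<And>x k j w. w \<in> A k \<Longrightarrow> w \<in> B k j \<Longrightarrow> g x w = zs k j x w"
      using piecewise[OF g] by metis
    show ?thesis
    proof (rule AE_l0_partition[OF l0_partition_refine[OF A B]])
      fix m
      obtain k j where d: "prod_decode m = (k, j)"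
        by (metis surj_pair)
      have "AE w in P. w \<in> A k \<longrightarrow> \<bar>zs k j y w - zs k j x w\<bar> < r w"
        using equi y zs by blast
      then show "AE w in P. w \<in> refine A B m \<longrightarrow> \<bar>g x w - g y w\<bar> < r w"
        by eventually_elim (auto dest!: mem_refine[OF _ d] simp: g_eq abs_minus_commute)
    qed
  qed
  then show ?thesis
    using U by blast
qed

lemma stable_equicontinuous_if_totally_bounded:
  assumes tb: "stable_totally_bounded P X F"
  shows "stable_equicontinuous P X F"
  unfolding stable_equicontinuous_def
proof (intro ballI)
  fix x r assume x: "x \<in> K" and r: "r \<in> L0pp P"
  define r3 where "r3 = (\<lambda>w. r w / 3)"
  have r3: "r3 \<in> L0pp P"
    using r unfolding r3_def L0pp_def L0_def by (auto elim!: AE_mp intro!: AE_I2)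
  obtain N where N: "stable_finite P F N" and net: "\<forall>f\<in>F. \<exists>g\<in>N. ltae P (dinf P X f g) r3"
    using tb r3 unfolding stable_totally_bounded_def by blast
  obtain U where U: "openin X U" "x \<in> U"
    and equi: "\<forall>y\<in>U. \<forall>g\<in>N. AE w in P. \<bar>g x w - g y w\<bar> < r3 w"
    using stable_finite_equicontinuous[OF N x r3] by blast
  have "leae P (\<lambda>w. \<bar>f x w - f y w\<bar>) r" if y: "y \<in> U" and f: "f \<in> F" for y f
  proof -
    have yK: "y \<in> K"
      using y openin_subset[OF U(1)] by blast
    obtain g where g: "g \<in> N" "ltae P (dinf P X f g) r3"
      using net f by blast
    obtain g' where g': "g' \<in> F" "\<forall>x\<in>K. eqae P (g x) (g' x)"
      using stable_finite_ae_in_F[OF N g(1)] by blast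
    have "AE w in P. \<bar>f x w - g x w\<bar> \<le> dinf P X f g w" "AE w in P. \<bar>f y w - g y w\<bar> \<le> dinf P X f g w"
      using dinf_attained(2)[OF f g'] x yK unfolding leae_def by blast+
    moreover have "AE w in P. \<bar>g x w - g y w\<bar> < r3 w"
      using equi y g(1) by blast
    ultimately show ?thesis
      using g(2) unfolding leae_def ltae_def
    proof eventually_elim
      case (elim w)
      then show ?case
        using abs_diff_triangle[of "f x w" "f y w" "g x w" "g y w"] unfolding r3_def by linarith
    qed
  qed
  then show "\<exists>V. (\<exists>U. openin X U \<and> x \<in> U \<and> U \<subseteq> V) \<and> V \<subseteq> K \<and>
      (\<forall>y\<in>V. \<forall>f\<in>F. leae P (\<lambda>w. \<bar>f x w - f y w\<bar>) r)"
    using U openin_subset[OF U(1)] by blast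
qed

end

section \<open>Stable finite subcovers\<close>

locale basic_neighbourhoods = stable_function_family P smul X F
  for P :: "'w measure" and smul :: "('w \<Rightarrow> real) \<Rightarrow> 'e::ab_group_add \<Rightarrow> 'e" and X F +
  fixes W :: "'e \<Rightarrow> 'e set"
  assumes W_basis: "x \<in> K \<Longrightarrow> W x \<in> basis" and W_centre: "x \<in> K \<Longrightarrow> x \<in> W x"
begin

lemma W_stable: "x \<in> K \<Longrightarrow> stable_set P smul (W x)"
  using basis_stable[OF W_basis] .

lemma W_openin: "x \<in> K \<Longrightarrow> openin X (W x)"
  using basis_openin[OF W_basis] .

lemma W_subset: "x \<in> K \<Longrightarrow> W x \<subseteq> K"
  using openin_subset[OF W_openin] .

definition nbhd_events :: "'e \<Rightarrow> 'e \<Rightarrow> 'w set set" where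
  "nbhd_events x y = {S \<in> sets P. \<exists>u\<in>W x. agree_on S y u}"

lemma nbhd_events_ex_ae_greatest:
  assumes x: "x \<in> K"
  shows "\<exists>S\<in>nbhd_events x y. \<forall>T\<in>nbhd_events x y. AE w in P. w \<in> T \<longrightarrow> w \<in> S"
proof (rule ex_ae_greatest_event)
  show "nbhd_events x y \<subseteq> sets P"
    unfolding nbhd_events_def by blast
  have "{} \<in> nbhd_events x y"
    unfolding nbhd_events_def agree_on_def using W_centre[OF x] by auto
  then show "nbhd_events x y \<noteq> {}"
    by blast
  fix S :: "nat \<Rightarrow> 'w set" assume S: "\<And>n. S n \<in> nbhd_events x y"
  have S_sets: "\<And>n. S n \<in> sets P"
    using S unfolding nbhd_events_def by blast
  have "\<forall>n. \<exists>u\<in>W x. agree_on (S n) y u"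
    using S unfolding nbhd_events_def by blast
  then obtain u where u: "\<And>n. u n \<in> W x" "\<And>n. agree_on (S n) y (u n)"
    by metis
  obtain z where z: "z \<in> W x" "\<And>n. agree_on (disjointed S n) z (u n)"
    using stable_set_glue[OF W_stable[OF x], of S u] S_sets u(1) by blast
  have "agree_on (disjointed S n) y z" for n
  proof -
    have "agree_on (disjointed S n) y (u n)"
      by (rule agree_on_subset[OF u(2) S_sets sets_disjointed[of S, OF S_sets] disjointed_subset])
    then show ?thesis
      using z(2) agree_on_trans agree_on_sym by blast
  qed
  then have "agree_on (\<Union>n. disjointed S n) y z"
    using agree_on_UN[of "disjointed S" y z] sets_disjointed[of S, OF S_sets] by blast
  then have "agree_on (\<Union>n. S n) y z"
    by (simp add: UN_disjointed_eq)
  then show "(\<Union>n. S n) \<in> nbhd_events x y"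
    unfolding nbhd_events_def using z(1) S_sets by blast
qed

definition nbhd_event :: "'e \<Rightarrow> 'e \<Rightarrow> 'w set" where
  "nbhd_event x y = (SOME S. S \<in> nbhd_events x y \<and> (\<forall>T\<in>nbhd_events x y. AE w in P. w \<in> T \<longrightarrow> w \<in> S))"

lemma nbhd_event:
  assumes "x \<in> K"
  shows "nbhd_event x y \<in> nbhd_events x y \<and>
    (\<forall>T\<in>nbhd_events x y. AE w in P. w \<in> T \<longrightarrow> w \<in> nbhd_event x y)"
proof -
  obtain S where "S \<in> nbhd_events x y \<and> (\<forall>T\<in>nbhd_events x y. AE w in P. w \<in> T \<longrightarrow> w \<in> S)"
    using nbhd_events_ex_ae_greatest[OF assms, of y] by blast
  then show ?thesis
    unfolding nbhd_event_def by (rule someI)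
qed

lemma nbhd_event_sets: "x \<in> K \<Longrightarrow> nbhd_event x y \<in> sets P"
  using nbhd_event unfolding nbhd_events_def by blast

lemma nbhd_event_witness: "x \<in> K \<Longrightarrow> \<exists>u\<in>W x. agree_on (nbhd_event x y) y u"
  using nbhd_event unfolding nbhd_events_def by blast

lemma nbhd_event_greatest:
  "x \<in> K \<Longrightarrow> S \<in> sets P \<Longrightarrow> u \<in> W x \<Longrightarrow> agree_on S y u \<Longrightarrow> AE w in P. w \<in> S \<longrightarrow> w \<in> nbhd_event x y"
  using nbhd_event unfolding nbhd_events_def by blast

lemma nbhd_event_full: "x \<in> K \<Longrightarrow> y \<in> W x \<Longrightarrow> AE w in P. w \<in> nbhd_event x y"
  using nbhd_event_greatest[of x "space P" y y] by (auto simp: agree_on_refl elim!: AE_mp intro!: AE_I2)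

lemma nbhd_event_agree_on:
  assumes x: "x \<in> K" and D: "D \<in> sets P" and agree: "agree_on D z y"
  shows "AE w in P. w \<in> D \<longrightarrow> w \<in> nbhd_event x z \<longrightarrow> w \<in> nbhd_event x y"
proof -
  obtain u where u: "u \<in> W x" "agree_on (nbhd_event x z) z u"
    using nbhd_event_witness[OF x] by blast
  have D': "D \<inter> nbhd_event x z \<in> sets P"
    using D nbhd_event_sets[OF x] by blast
  have "agree_on (D \<inter> nbhd_event x z) y z"
    by (rule agree_on_subset[OF agree_on_sym[OF agree] D D']) blast
  moreover have "agree_on (D \<inter> nbhd_event x z) z u"
    by (rule agree_on_subset[OF u(2) nbhd_event_sets[OF x] D']) blast
  ultimately have "agree_on (D \<inter> nbhd_event x z) y u"
    by (rule agree_on_trans)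
  from nbhd_event_greatest[OF x D' u(1) this] show ?thesis
    by (rule AE_mp) (intro AE_I2, blast)
qed

text \<open>\<open>A\<close> and \<open>XX\<close> encode the stable finite set of centres \<open>\<Sum>\<^sub>k 1\<^sub>A\<^sub>k st(XX k)\<close>; a point \<open>y\<close> is
  covered at \<open>w\<close> if \<open>w \<in> A k\<close> and, at \<open>w\<close>, \<open>y\<close> lies in the neighbourhood of some centre in \<open>XX k\<close>.\<close>

definition finite_centres :: "(nat \<Rightarrow> 'w set) \<Rightarrow> (nat \<Rightarrow> 'e set) \<Rightarrow> bool" where
  "finite_centres A XX \<longleftrightarrow> l0_partition P A \<and> (\<forall>k. finite (XX k) \<and> XX k \<noteq> {} \<and> XX k \<subseteq> K)"

definition covered :: "(nat \<Rightarrow> 'w set) \<Rightarrow> (nat \<Rightarrow> 'e set) \<Rightarrow> 'e \<Rightarrow> 'w \<Rightarrow> bool" where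
  "covered A XX y w \<longleftrightarrow> (\<exists>k. w \<in> A k \<and> (\<exists>x\<in>XX k. w \<in> nbhd_event x y))"

lemma finite_centres_single: "x \<in> K \<Longrightarrow> finite_centres (bipartition P (space P)) (\<lambda>k. {x})"
  unfolding finite_centres_def using l0_partition_bipartition[of "space P" P] by auto

lemma covered_agree_on:
  assumes C: "finite_centres A XX" and D: "D \<in> sets P" and agree: "agree_on D z y"
  shows "AE w in P. w \<in> D \<longrightarrow> covered A XX z w \<longrightarrow> covered A XX y w"
proof -
  have "AE w in P. \<forall>k. \<forall>x\<in>XX k. w \<in> D \<longrightarrow> w \<in> nbhd_event x z \<longrightarrow> w \<in> nbhd_event x y"
    unfolding AE_all_countable
  proof
    fix k
    have "finite (XX k)" and "XX k \<subseteq> K"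
      using C unfolding finite_centres_def by auto
    then show "AE w in P. \<forall>x\<in>XX k. w \<in> D \<longrightarrow> w \<in> nbhd_event x z \<longrightarrow> w \<in> nbhd_event x y"
      using nbhd_event_agree_on[OF _ D agree] by (intro AE_finite_allI) blast+
  qed
  then show ?thesis
    by (rule AE_mp) (rule AE_I2, unfold covered_def, blast)
qed

lemma covered_sets:
  assumes C: "finite_centres A XX"
  shows "{w \<in> space P. covered A XX y w} \<in> sets P"
proof -
  have A: "l0_partition P A" and XX: "\<And>k. finite (XX k)" "\<And>k. XX k \<subseteq> K"
    using C unfolding finite_centres_def by auto
  have "{w \<in> space P. covered A XX y w} = (\<Union>k. A k \<inter> (\<Union>x\<in>XX k. nbhd_event x y))"
    unfolding covered_def using l0_partition_subset_space[OF A] by blast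
  moreover have "(\<Union>x\<in>XX k. nbhd_event x y) \<in> sets P" for k
    using XX(1) by (rule sets.finite_UN) (use XX(2) nbhd_event_sets in blast)
  ultimately show ?thesis
    using l0_partition_sets[OF A] by auto
qed

definition refine_centres :: "(nat \<Rightarrow> nat \<Rightarrow> 'e set) \<Rightarrow> nat \<Rightarrow> 'e set" where
  "refine_centres XX m = (case prod_decode m of (n, k) \<Rightarrow> XX n k)"

lemma finite_centres_refine:
  assumes D: "l0_partition P D" and C: "\<And>n. finite_centres (AA n) (XX n)"
  shows "finite_centres (refine D AA) (refine_centres XX)"
  unfolding finite_centres_def
proof (intro conjI allI)
  show "l0_partition P (refine D AA)"
    using l0_partition_refine[OF D] C unfolding finite_centres_def by blast
  fix m
  obtain n k where "prod_decode m = (n, k)"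
    by (metis surj_pair)
  then show "finite (refine_centres XX m)" "refine_centres XX m \<noteq> {}" "refine_centres XX m \<subseteq> K"
    using C[of n] unfolding refine_centres_def finite_centres_def by auto
qed

lemma covered_refine_iff:
  assumes D: "l0_partition P D" and C: "\<And>n. finite_centres (AA n) (XX n)" and w: "w \<in> D n"
  shows "covered (refine D AA) (refine_centres XX) y w \<longleftrightarrow> covered (AA n) (XX n) y w"
proof
  assume "covered (refine D AA) (refine_centres XX) y w"
  then obtain m x where m: "w \<in> refine D AA m" "x \<in> refine_centres XX m" "w \<in> nbhd_event x y"
    unfolding covered_def by blast
  obtain n' k where d: "prod_decode m = (n', k)"
    by (metis surj_pair)
  have "w \<in> D n'" "w \<in> AA n' k"
    using mem_refine[OF m(1) d] by auto
  moreover have "n' = n"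
    using l0_partition_unique[OF D w] \<open>w \<in> D n'\<close> by blast
  ultimately show "covered (AA n) (XX n) y w"
    unfolding covered_def using m(2,3) d by (auto simp: refine_centres_def)
next
  assume "covered (AA n) (XX n) y w"
  then obtain k x where k: "w \<in> AA n k" "x \<in> XX n k" "w \<in> nbhd_event x y"
    unfolding covered_def by blast
  show "covered (refine D AA) (refine_centres XX) y w"
    unfolding covered_def
    by (rule exI[of _ "prod_encode (n, k)"]) (use k w in \<open>auto simp: refine_centres_def\<close>)
qed

definition uncovered :: "'w set \<Rightarrow> (nat \<Rightarrow> 'w set) \<Rightarrow> (nat \<Rightarrow> 'e set) \<Rightarrow> 'e set" where
  "uncovered E A XX = {y \<in> K. AE w in P. w \<in> E \<longrightarrow> \<not> covered A XX y w}"

lemma uncovered_mcc: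
  assumes C: "finite_centres A XX" and D: "l0_partition P D" and ys: "\<And>n. ys n \<in> uncovered E A XX"
  shows "mcc smul D ys \<in> uncovered E A XX"
proof -
  have ysK: "ys n \<in> K" for n
    using ys unfolding uncovered_def by blast
  have "AE w in P. w \<in> E \<longrightarrow> \<not> covered A XX (mcc smul D ys) w"
  proof (rule AE_l0_partition[OF D])
    fix n
    have "AE w in P. w \<in> D n \<longrightarrow> covered A XX (mcc smul D ys) w \<longrightarrow> covered A XX (ys n) w"
      by (rule covered_agree_on[OF C l0_partition_sets[OF D] agree_on_mcc[OF D]])
    moreover have "AE w in P. w \<in> E \<longrightarrow> \<not> covered A XX (ys n) w"
      using ys[of n] unfolding uncovered_def by blast
    ultimately show "AE w in P. w \<in> D n \<longrightarrow> w \<in> E \<longrightarrow> \<not> covered A XX (mcc smul D ys) w"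
      by eventually_elim blast
  qed
  then show ?thesis
    unfolding uncovered_def using stable_set_mcc[OF K_stable D, of ys] ysK by blast
qed

lemma uncovered_directed:
  assumes C: "finite_centres A XX" and C': "finite_centres A' XX'"
  shows "\<exists>A'' XX''. finite_centres A'' XX'' \<and> uncovered E A'' XX'' \<subseteq> uncovered E A XX \<inter> uncovered E A' XX'"
proof -
  have A: "l0_partition P A" and A': "l0_partition P A'"
    using C C' unfolding finite_centres_def by auto
  define A'' where "A'' = refine A (\<lambda>_. A')"
  define XX'' where "XX'' m = (case prod_decode m of (k, k') \<Rightarrow> XX k \<union> XX' k')" for m
  have "finite_centres A'' XX''"
    unfolding finite_centres_def
  proof (intro conjI allI)
    show "l0_partition P A''"
      unfolding A''_def by (rule l0_partition_refine[OF A A'])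
    fix m
    obtain k k' where "prod_decode m = (k, k')"
      by (metis surj_pair)
    then show "finite (XX'' m)" "XX'' m \<noteq> {}" "XX'' m \<subseteq> K"
      using C C' unfolding XX''_def finite_centres_def by auto
  qed
  moreover have cov: "covered A'' XX'' y w"
    if w: "w \<in> space P" and "covered A XX y w \<or> covered A' XX' y w" for y w
  proof -
    obtain k k' where "w \<in> A k" "w \<in> A' k'"
      using l0_partition_cover[OF A w] l0_partition_cover[OF A' w] by blast
    with that show ?thesis
      unfolding covered_def A''_def XX''_def
      by (intro exI[of _ "prod_encode (k, k')"])
        (auto dest: l0_partition_unique[OF A] l0_partition_unique[OF A'])
  qed
  have "uncovered E A'' XX'' \<subseteq> uncovered E A XX \<inter> uncovered E A' XX'"
  proof
    fix y assume "y \<in> uncovered E A'' XX''"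
    then have "y \<in> K" and "AE w in P. w \<in> E \<longrightarrow> \<not> covered A'' XX'' y w"
      unfolding uncovered_def by auto
    moreover have "AE w in P. w \<in> space P"
      by (rule AE_I2) simp
    ultimately have "AE w in P. w \<in> E \<longrightarrow> \<not> covered A XX y w"
      and "AE w in P. w \<in> E \<longrightarrow> \<not> covered A' XX' y w"
      by (eventually_elim, use cov in blast)+
    then show "y \<in> uncovered E A XX \<inter> uncovered E A' XX'"
      unfolding uncovered_def using \<open>y \<in> K\<close> by blast
  qed
  ultimately show ?thesis
    by blast
qed

lemma mcc_uncovered_refine:
  assumes D: "l0_partition P D" and C: "\<And>n. finite_centres (AA n) (XX n)"
    and ys: "\<And>n. ys n \<in> uncovered E (AA n) (XX n)"
  shows "mcc smul D ys \<in> uncovered E (refine D AA) (refine_centres XX)"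
proof -
  have ysK: "ys n \<in> K" for n
    using ys unfolding uncovered_def by blast
  have "AE w in P. w \<in> E \<longrightarrow> \<not> covered (refine D AA) (refine_centres XX) (mcc smul D ys) w"
  proof (rule AE_l0_partition[OF D])
    fix n
    have "AE w in P. w \<in> D n \<longrightarrow>
        covered (AA n) (XX n) (mcc smul D ys) w \<longrightarrow> covered (AA n) (XX n) (ys n) w"
      by (rule covered_agree_on[OF C l0_partition_sets[OF D] agree_on_mcc[OF D]])
    moreover have "AE w in P. w \<in> E \<longrightarrow> \<not> covered (AA n) (XX n) (ys n) w"
      using ys[of n] unfolding uncovered_def by blast
    ultimately show "AE w in P. w \<in> D n \<longrightarrow> w \<in> E \<longrightarrow>
        \<not> covered (refine D AA) (refine_centres XX) (mcc smul D ys) w"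
      by eventually_elim (use covered_refine_iff[where AA=AA and XX=XX, OF D C] in blast)
  qed
  then show ?thesis
    unfolding uncovered_def using stable_set_mcc[OF K_stable D, of ys] ysK by blast
qed

lemma ex_uncovered_pieces:
  assumes D: "l0_partition P D" and C: "\<And>n. finite_centres (AA n) (XX n)"
    and ne: "\<And>n. uncovered E (AA n) (XX n) \<noteq> {}"
    and "y \<in> uncovered E (refine D AA) (refine_centres XX)"
  shows "\<exists>ys. (\<forall>n. ys n \<in> uncovered E (AA n) (XX n)) \<and> mcc smul D ys = y"
proof -
  have yK: "y \<in> K" and y: "AE w in P. w \<in> E \<longrightarrow> \<not> covered (refine D AA) (refine_centres XX) y w"
    using assms(4) unfolding uncovered_def by auto
  have "\<forall>n. \<exists>z. z \<in> uncovered E (AA n) (XX n)"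
    using ne by blast
  then obtain z where z: "\<And>n. z n \<in> uncovered E (AA n) (XX n)"
    by metis
  have zK: "z n \<in> K" for n
    using z unfolding uncovered_def by blast
  have "\<forall>n. \<exists>u\<in>K. agree_on (D n) u y \<and> agree_on (space P - D n) u (z n)"
    using stable_set_glue2[OF K_stable l0_partition_sets[OF D] yK zK] by blast
  then obtain ys where ys: "\<And>n. ys n \<in> K" "\<And>n. agree_on (D n) (ys n) y"
    "\<And>n. agree_on (space P - D n) (ys n) (z n)"
    by metis
  have "ys n \<in> uncovered E (AA n) (XX n)" for n
  proof -
    have Dn: "D n \<in> sets P"
      using l0_partition_sets[OF D] .
    have "AE w in P. w \<in> D n \<longrightarrow> covered (AA n) (XX n) (ys n) w \<longrightarrow> covered (AA n) (XX n) y w"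
      by (rule covered_agree_on[OF C Dn ys(2)])
    moreover have "AE w in P. w \<in> space P - D n \<longrightarrow>
        covered (AA n) (XX n) (ys n) w \<longrightarrow> covered (AA n) (XX n) (z n) w"
      by (rule covered_agree_on[OF C _ ys(3)]) (use Dn in auto)
    moreover have "AE w in P. w \<in> E \<longrightarrow> \<not> covered (AA n) (XX n) (z n) w"
      using z unfolding uncovered_def by blast
    moreover have "AE w in P. w \<in> space P"
      by (rule AE_I2) simp
    ultimately have "AE w in P. w \<in> E \<longrightarrow> \<not> covered (AA n) (XX n) (ys n) w"
      using y by eventually_elim (use covered_refine_iff[where AA=AA and XX=XX, OF D C] in blast)
    then show ?thesis
      unfolding uncovered_def using ys(1) by blast
  qed
  moreover have "mcc smul D ys = y"
    by (rule mcc_eqI[OF D]) (rule agree_on_sym[OF ys(2)])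
  ultimately show ?thesis
    by blast
qed

lemma cc_sets_uncovered:
  assumes D: "l0_partition P D" and C: "\<And>n. finite_centres (AA n) (XX n)"
    and ne: "\<And>n. uncovered E (AA n) (XX n) \<noteq> {}"
  shows "cc_sets smul D (\<lambda>n. uncovered E (AA n) (XX n)) = uncovered E (refine D AA) (refine_centres XX)"
proof
  show "cc_sets smul D (\<lambda>n. uncovered E (AA n) (XX n)) \<subseteq> uncovered E (refine D AA) (refine_centres XX)"
    unfolding cc_sets_def using mcc_uncovered_refine[where AA=AA and XX=XX and E=E, OF D C] by blast
  show "uncovered E (refine D AA) (refine_centres XX) \<subseteq> cc_sets smul D (\<lambda>n. uncovered E (AA n) (XX n))"
    unfolding cc_sets_def using ex_uncovered_pieces[where AA=AA and XX=XX and E=E, OF D C ne] by blast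
qed

lemma stable_coll_uncovered:
  assumes ne: "\<And>A XX. finite_centres A XX \<Longrightarrow> uncovered E A XX \<noteq> {}"
  shows "stable_coll P smul {uncovered E A XX | A XX. finite_centres A XX}"
  unfolding stable_coll_def
proof (intro conjI ballI allI impI)
  obtain x where "x \<in> K"
    using stable_set_nonempty[OF K_stable] by blast
  then show "{uncovered E A XX | A XX. finite_centres A XX} \<noteq> {}"
    using finite_centres_single by blast
  show "stable_set P smul U" if "U \<in> {uncovered E A XX | A XX. finite_centres A XX}" for U
    using that ne uncovered_mcc unfolding stable_set_def by blast
  fix D :: "nat \<Rightarrow> 'w set" and Us :: "nat \<Rightarrow> 'e set"
  assume a: "l0_partition P D \<and> (\<forall>n. Us n \<in> {uncovered E A XX | A XX. finite_centres A XX})"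
  then have D: "l0_partition P D"
    by blast
  have "\<forall>n. \<exists>A XX. finite_centres A XX \<and> Us n = uncovered E A XX"
    using a by blast
  then obtain AA XX where C: "\<And>n. finite_centres (AA n) (XX n)"
    and Us: "Us = (\<lambda>n. uncovered E (AA n) (XX n))"
    by metis
  have "cc_sets smul D Us = uncovered E (refine D AA) (refine_centres XX)"
    unfolding Us by (rule cc_sets_uncovered[OF D]) (use C ne in blast)+
  moreover have "finite_centres (refine D AA) (refine_centres XX)"
    by (rule finite_centres_refine[OF D]) (use C in blast)
  ultimately show "cc_sets smul D Us \<in> {uncovered E A XX | A XX. finite_centres A XX}"
    by blast
qed

definition coverable :: "'w set set" where
  "coverable = {S \<in> sets P. \<exists>A XX. finite_centres A XX \<and> (\<forall>y\<in>K. AE w in P. w \<in> S \<longrightarrow> covered A XX y w)}"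

lemma coverable_UN:
  fixes S :: "nat \<Rightarrow> 'w set"
  assumes S: "\<And>n. S n \<in> coverable"
  shows "(\<Union>n. S n) \<in> coverable"
proof -
  have S_sets: "\<And>n. S n \<in> sets P"
    using S unfolding coverable_def by blast
  have "\<forall>n. \<exists>A XX. finite_centres A XX \<and> (\<forall>y\<in>K. AE w in P. w \<in> S n \<longrightarrow> covered A XX y w)"
    using S unfolding coverable_def by blast
  then obtain AA XX where C: "\<And>n. finite_centres (AA n) (XX n)"
    and cov: "\<And>n y. y \<in> K \<Longrightarrow> AE w in P. w \<in> S n \<longrightarrow> covered (AA n) (XX n) y w"
    by metis
  txt \<open>Piece \<open>Suc n\<close> of the disjoint partition lies in \<open>S n\<close>; piece \<open>0\<close> gets arbitrary centres.\<close>
  define AA' where "AA' = case_nat (AA 0) AA"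
  define XX' where "XX' = case_nat (XX 0) XX"
  define D where "D = disjoint_partition P S"
  have D: "l0_partition P D"
    unfolding D_def by (rule l0_partition_disjoint_partition) (rule S_sets)
  have D_Suc: "D (Suc n) = disjointed S n" for n
    unfolding D_def by (rule disjoint_partition_Suc) (rule S_sets)
  have C': "finite_centres (AA' n) (XX' n)" for n
    unfolding AA'_def XX'_def using C by (cases n) auto
  have "AE w in P. w \<in> (\<Union>n. S n) \<longrightarrow> covered (refine D AA') (refine_centres XX') y w"
    if y: "y \<in> K" for y
  proof -
    have "AE w in P. \<forall>n. w \<in> S n \<longrightarrow> covered (AA n) (XX n) y w"
      unfolding AE_all_countable using cov[OF y] by blast
    then show ?thesis
    proof (rule AE_mp, intro AE_I2 impI)
      fix w assume cov_w: "\<forall>n. w \<in> S n \<longrightarrow> covered (AA n) (XX n) y w" and "w \<in> (\<Union>n. S n)"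
      then have "w \<in> (\<Union>n. disjointed S n)"
        by (simp add: UN_disjointed_eq)
      then obtain n where "w \<in> disjointed S n"
        by blast
      then have "w \<in> D (Suc n)" and "w \<in> S n"
        using D_Suc[of n] disjointed_subset[of S n] by auto
      moreover have "covered (AA' (Suc n)) (XX' (Suc n)) y w"
        using cov_w \<open>w \<in> S n\<close> unfolding AA'_def XX'_def by simp
      ultimately show "covered (refine D AA') (refine_centres XX') y w"
        using covered_refine_iff[where AA=AA' and XX=XX', OF D C'] by blast
    qed
  qed
  moreover have "finite_centres (refine D AA') (refine_centres XX')"
    by (rule finite_centres_refine[OF D C'])
  ultimately show ?thesis
    unfolding coverable_def using S_sets by blast
qed

lemma ex_uncovered_UN:
  fixes T :: "nat \<Rightarrow> 'w set"
  assumes C: "finite_centres A XX" and T: "\<And>n. T n \<in> sets P" and ys: "\<And>n. ys n \<in> K"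
    and uncov: "\<And>n. AE w in P. w \<in> T n \<longrightarrow> \<not> covered A XX (ys n) w"
  shows "\<exists>z\<in>K. AE w in P. w \<in> (\<Union>n. T n) \<longrightarrow> \<not> covered A XX z w"
proof -
  obtain z where z: "z \<in> K" "\<forall>n. agree_on (disjointed T n) z (ys n)"
    using stable_set_glue[OF K_stable, of T ys] T ys by blast
  have "AE w in P. \<forall>n. (w \<in> disjointed T n \<longrightarrow> covered A XX z w \<longrightarrow> covered A XX (ys n) w) \<and>
      (w \<in> T n \<longrightarrow> \<not> covered A XX (ys n) w)"
    unfolding AE_all_countable
  proof
    fix n
    have "AE w in P. w \<in> disjointed T n \<longrightarrow> covered A XX z w \<longrightarrow> covered A XX (ys n) w"
      by (rule covered_agree_on[OF C sets_disjointed[of T, OF T]]) (use z in blast)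
    with uncov[of n] show "AE w in P. (w \<in> disjointed T n \<longrightarrow> covered A XX z w \<longrightarrow> covered A XX (ys n) w) \<and>
        (w \<in> T n \<longrightarrow> \<not> covered A XX (ys n) w)"
      by eventually_elim blast
  qed
  then have "AE w in P. w \<in> (\<Union>n. T n) \<longrightarrow> \<not> covered A XX z w"
  proof (rule AE_mp, intro AE_I2 impI notI)
    fix w assume h: "\<forall>n. (w \<in> disjointed T n \<longrightarrow> covered A XX z w \<longrightarrow> covered A XX (ys n) w) \<and>
        (w \<in> T n \<longrightarrow> \<not> covered A XX (ys n) w)"
      and "w \<in> (\<Union>n. T n)" and "covered A XX z w"
    then have "w \<in> (\<Union>n. disjointed T n)"
      by (simp add: UN_disjointed_eq)
    then obtain n where "w \<in> disjointed T n"
      by blast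
    then show False
      using h \<open>covered A XX z w\<close> disjointed_subset[of T n] by blast
  qed
  then show ?thesis
    using z(1) by blast
qed

text \<open>The union of the events on which some point escapes the centres is, up to a null set, the
  whole complement of the greatest coverable event.\<close>

lemma uncovered_nonempty:
  assumes S: "S \<in> sets P" and greatest: "\<And>T. T \<in> coverable \<Longrightarrow> AE w in P. w \<in> T \<longrightarrow> w \<in> S"
    and C: "finite_centres A XX"
  shows "uncovered (space P - S) A XX \<noteq> {}"
proof -
  define E where "E = space P - S"
  define \<T> where "\<T> = {T \<in> sets P. T \<subseteq> E \<and> (\<exists>y\<in>K. AE w in P. w \<in> T \<longrightarrow> \<not> covered A XX y w)}"
  obtain x0 where "x0 \<in> K"
    using stable_set_nonempty[OF K_stable] by blast
  have "\<exists>T\<in>\<T>. \<forall>T'\<in>\<T>. AE w in P. w \<in> T' \<longrightarrow> w \<in> T"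
  proof (rule ex_ae_greatest_event)
    show "\<T> \<subseteq> sets P"
      unfolding \<T>_def by blast
    have "{} \<in> \<T>"
      unfolding \<T>_def using \<open>x0 \<in> K\<close> by (auto intro: AE_I2)
    then show "\<T> \<noteq> {}"
      by blast
    fix T :: "nat \<Rightarrow> 'w set" assume T: "\<And>n. T n \<in> \<T>"
    then have T_sets: "\<And>n. T n \<in> sets P" and T_E: "\<And>n. T n \<subseteq> E"
      unfolding \<T>_def by auto
    have "\<forall>n. \<exists>y\<in>K. AE w in P. w \<in> T n \<longrightarrow> \<not> covered A XX y w"
      using T unfolding \<T>_def by blast
    then obtain ys where "\<And>n. ys n \<in> K" "\<And>n. AE w in P. w \<in> T n \<longrightarrow> \<not> covered A XX (ys n) w"
      by metis
    then have "\<exists>z\<in>K. AE w in P. w \<in> (\<Union>n. T n) \<longrightarrow> \<not> covered A XX z w"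
      using ex_uncovered_UN[OF C, of T ys] T_sets by blast
    then show "(\<Union>n. T n) \<in> \<T>"
      unfolding \<T>_def using T_sets T_E by blast
  qed
  then obtain T where T: "T \<in> \<T>" and T_greatest: "\<And>T'. T' \<in> \<T> \<Longrightarrow> AE w in P. w \<in> T' \<longrightarrow> w \<in> T"
    by blast
  then obtain y where y: "y \<in> K" "AE w in P. w \<in> T \<longrightarrow> \<not> covered A XX y w"
    and T_sets: "T \<in> sets P"
    unfolding \<T>_def by blast
  define G where "G = E - T"
  have G_sets: "G \<in> sets P"
    unfolding G_def E_def using S T_sets by blast
  have "AE w in P. w \<notin> G"
  proof (cases "\<forall>y\<in>K. AE w in P. w \<in> G \<longrightarrow> covered A XX y w")
    case True
    then have "G \<in> coverable"
      unfolding coverable_def using G_sets C by blast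
    from greatest[OF this] show ?thesis
      by (rule AE_mp) (rule AE_I2, auto simp: G_def E_def)
  next
    case False
    then obtain y' where y': "y' \<in> K" "\<not> (AE w in P. w \<in> G \<longrightarrow> covered A XX y' w)"
      by blast
    define G' where "G' = G \<inter> (space P - {w \<in> space P. covered A XX y' w})"
    have "G' \<in> \<T>"
      unfolding \<T>_def G'_def using G_sets covered_sets[OF C] y'(1) by (auto simp: G_def intro!: AE_I2)
    from T_greatest[OF this] have "AE w in P. w \<in> G \<longrightarrow> covered A XX y' w"
      by (rule AE_mp) (rule AE_I2, auto simp: G'_def G_def)
    with y'(2) show ?thesis
      by blast
  qed
  with y(2) have "AE w in P. w \<in> E \<longrightarrow> \<not> covered A XX y w"
    by eventually_elim (auto simp: G_def)
  then show ?thesis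
    unfolding uncovered_def E_def using y(1) by blast
qed

lemma coverable_greatest_AE:
  assumes S: "S \<in> sets P" and greatest: "\<And>T. T \<in> coverable \<Longrightarrow> AE w in P. w \<in> T \<longrightarrow> w \<in> S"
  shows "AE w in P. w \<in> S"
proof -
  define E where "E = space P - S"
  let ?\<C> = "{uncovered E A XX | A XX. finite_centres A XX}"
  have "\<exists>z\<in>K. \<forall>U\<in>?\<C>. z \<in> X closure_of U"
  proof (rule ex_closure_point_directed)
    show "stable_coll P smul ?\<C>"
      by (rule stable_coll_uncovered) (use uncovered_nonempty[OF S greatest] in \<open>auto simp: E_def\<close>)
    show "U \<subseteq> K" if "U \<in> ?\<C>" for U
      using that unfolding uncovered_def by blast
    show "\<exists>W\<in>?\<C>. W \<subseteq> U \<inter> V" if UV: "U \<in> ?\<C>" "V \<in> ?\<C>" for U V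
    proof -
      obtain A XX A' XX' where "finite_centres A XX" "finite_centres A' XX'"
        and "U = uncovered E A XX" "V = uncovered E A' XX'"
        using UV by blast
      then show ?thesis
        using uncovered_directed[of A XX A' XX' E] by blast
    qed
  qed
  then obtain z where z: "z \<in> K" "z \<in> X closure_of uncovered E (bipartition P (space P)) (\<lambda>k. {z})"
    using finite_centres_single by blast
  then obtain y where y: "y \<in> uncovered E (bipartition P (space P)) (\<lambda>k. {z})" "y \<in> W z"
    unfolding in_closure_of using W_openin[OF z(1)] W_centre[OF z(1)] by blast
  have "AE w in P. w \<in> nbhd_event z y"
    by (rule nbhd_event_full[OF z(1) y(2)])
  moreover have "AE w in P. w \<in> E \<longrightarrow> \<not> covered (bipartition P (space P)) (\<lambda>k. {z}) y w"
    using y(1) unfolding uncovered_def by blast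
  moreover have "AE w in P. w \<in> space P"
    by (rule AE_I2) simp
  ultimately show ?thesis
  proof eventually_elim
    case (elim w)
    have "covered (bipartition P (space P)) (\<lambda>k. {z}) y w"
      unfolding covered_def by (rule exI[of _ 0]) (use elim in \<open>simp add: bipartition_def\<close>)
    then show ?case
      using elim unfolding E_def by blast
  qed
qed

theorem ex_finite_cover: "\<exists>A XX. finite_centres A XX \<and> (\<forall>y\<in>K. AE w in P. covered A XX y w)"
proof -
  have "\<exists>S\<in>coverable. \<forall>T\<in>coverable. AE w in P. w \<in> T \<longrightarrow> w \<in> S"
  proof (rule ex_ae_greatest_event)
    show "coverable \<subseteq> sets P"
      unfolding coverable_def by blast
    obtain x where "x \<in> K"
      using stable_set_nonempty[OF K_stable] by blast
    then have "{} \<in> coverable"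
      unfolding coverable_def using finite_centres_single by (auto intro: AE_I2)
    then show "coverable \<noteq> {}"
      by blast
  qed (rule coverable_UN)
  then obtain S where S: "S \<in> coverable" and greatest: "\<And>T. T \<in> coverable \<Longrightarrow> AE w in P. w \<in> T \<longrightarrow> w \<in> S"
    by blast
  obtain A XX where C: "finite_centres A XX" and cov: "\<And>y. y \<in> K \<Longrightarrow> AE w in P. w \<in> S \<longrightarrow> covered A XX y w"
    using S unfolding coverable_def by blast
  have "AE w in P. w \<in> S"
    by (rule coverable_greatest_AE[OF _ greatest]) (use S in \<open>simp add: coverable_def\<close>)
  then have "AE w in P. covered A XX y w" if "y \<in> K" for y
    using cov[OF that] by eventually_elim blast
  then show ?thesis
    using C by blast
qed

lemma covered_estimate:
  assumes small: "\<And>x y h. x \<in> K \<Longrightarrow> y \<in> W x \<Longrightarrow> h \<in> F \<Longrightarrow> leae P (\<lambda>w. \<bar>h x w - h y w\<bar>) eps"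
    and C: "finite_centres A XX" and y: "y \<in> K" and cov: "AE w in P. covered A XX y w"
    and f: "f \<in> F" and g: "g \<in> F"
    and close: "\<And>k x. x \<in> XX k \<Longrightarrow> AE w in P. w \<in> A k \<longrightarrow> \<bar>f x w - g x w\<bar> < eps w"
  shows "AE w in P. \<bar>f y w - g y w\<bar> < 3 * eps w"
proof -
  have "AE w in P. \<forall>k. \<forall>x\<in>XX k. w \<in> A k \<longrightarrow> w \<in> nbhd_event x y \<longrightarrow> \<bar>f y w - g y w\<bar> < 3 * eps w"
    unfolding AE_all_countable
  proof
    fix k
    have XX: "finite (XX k)" "XX k \<subseteq> K"
      using C unfolding finite_centres_def by auto
    show "AE w in P. \<forall>x\<in>XX k. w \<in> A k \<longrightarrow> w \<in> nbhd_event x y \<longrightarrow> \<bar>f y w - g y w\<bar> < 3 * eps w"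
    proof (rule AE_finite_allI[OF XX(1)])
      fix x assume x: "x \<in> XX k"
      then have xK: "x \<in> K"
        using XX(2) by blast
      obtain u where u: "u \<in> W x" "agree_on (nbhd_event x y) y u"
        using nbhd_event_witness[OF xK] by blast
      have uK: "u \<in> K"
        using u(1) W_subset[OF xK] by blast
      have ev: "nbhd_event x y \<in> sets P"
        by (rule nbhd_event_sets[OF xK])
      have "AE w in P. w \<in> nbhd_event x y \<longrightarrow> f y w = f u w"
        by (rule F_agree_on[OF f y uK ev u(2)])
      moreover have "AE w in P. w \<in> nbhd_event x y \<longrightarrow> g y w = g u w"
        by (rule F_agree_on[OF g y uK ev u(2)])
      moreover have "AE w in P. \<bar>f x w - f u w\<bar> \<le> eps w" "AE w in P. \<bar>g x w - g u w\<bar> \<le> eps w"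
        using small[OF xK u(1) f] small[OF xK u(1) g] unfolding leae_def by blast+
      moreover have "AE w in P. w \<in> A k \<longrightarrow> \<bar>f x w - g x w\<bar> < eps w"
        by (rule close[OF x])
      ultimately show "AE w in P. w \<in> A k \<longrightarrow> w \<in> nbhd_event x y \<longrightarrow> \<bar>f y w - g y w\<bar> < 3 * eps w"
      proof (eventually_elim, intro impI)
        case (elim w)
        assume "w \<in> A k" "w \<in> nbhd_event x y"
        then have "f y w = f u w" "g y w = g u w" "\<bar>f x w - g x w\<bar> < eps w"
          using elim by auto
        moreover have "\<bar>f u w - f x w\<bar> \<le> eps w" "\<bar>g u w - g x w\<bar> \<le> eps w"
          using elim by (simp_all add: abs_minus_commute)
        ultimately show "\<bar>f y w - g y w\<bar> < 3 * eps w"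
          using abs_diff_triangle[of "f u w" "g u w" "f x w" "g x w"] by linarith
      qed
    qed
  qed
  with cov show ?thesis
    unfolding covered_def by eventually_elim blast
qed

end

section \<open>Finite nets by quantization\<close>

lemma floor_eq_imp_abs_diff_less:
  assumes "\<lfloor>(u::real) * real (Suc b)\<rfloor> = \<lfloor>v * real (Suc b)\<rfloor>"
  shows "\<bar>u - v\<bar> < 1 / real (Suc b)"
proof -
  have "\<bar>u * real (Suc b) - v * real (Suc b)\<bar> < 1"
    using assms floor_correct[of "u * real (Suc b)"] floor_correct[of "v * real (Suc b)"]
    by (simp add: abs_less_iff) linarith
  then have "\<bar>u - v\<bar> * real (Suc b) < 1"
    by (simp add: abs_mult left_diff_distrib[symmetric])
  then show ?thesis
    by (simp add: field_simps)
qed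

lemma floor_mult_bounded:
  assumes "\<bar>u::real\<bar> < real (Suc a)"
  shows "\<lfloor>u * real (Suc b)\<rfloor> \<in> {- int (Suc a * Suc b) .. int (Suc a * Suc b)}"
proof -
  have "\<bar>u\<bar> * real (Suc b) < real (Suc a) * real (Suc b)"
    by (rule mult_strict_right_mono[OF assms]) simp
  moreover have "\<bar>u * real (Suc b)\<bar> = \<bar>u\<bar> * real (Suc b)"
    by (simp add: abs_mult)
  moreover have "real (Suc a * Suc b) = real (Suc a) * real (Suc b)"
    by (simp only: of_nat_mult)
  ultimately have "\<bar>u * real (Suc b)\<bar> < real (Suc a * Suc b)"
    by simp
  then have "- real (Suc a * Suc b) < u * real (Suc b)" "u * real (Suc b) < real (Suc a * Suc b)"
    unfolding abs_less_iff by auto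
  then show ?thesis
    unfolding atLeastAtMost_iff le_floor_iff floor_le_iff by simp
qed

definition unit_level :: "('a \<Rightarrow> real) \<Rightarrow> 'a measure \<Rightarrow> nat \<Rightarrow> 'a set" where
  "unit_level g M a = {w \<in> space M. real a \<le> g w \<and> g w < real a + 1}"

lemma l0_partition_unit_level:
  assumes g[measurable]: "g \<in> borel_measurable M" and nonneg: "\<And>w. w \<in> space M \<Longrightarrow> 0 \<le> g w"
  shows "l0_partition M (unit_level g M)"
  unfolding l0_partition_def
proof (intro conjI)
  show "\<forall>a. unit_level g M a \<in> sets M"
    unfolding unit_level_def by (intro allI) measurable
  show "disjoint_family (unit_level g M)"
    unfolding disjoint_family_on_def unit_level_def
    by (auto simp: disjoint_iff)
  show "(\<Union>a. unit_level g M a) = space M"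
  proof
    show "space M \<subseteq> (\<Union>a. unit_level g M a)"
    proof
      fix w assume w: "w \<in> space M"
      have "real (nat \<lfloor>g w\<rfloor>) \<le> g w" "g w < real (nat \<lfloor>g w\<rfloor>) + 1"
        using nonneg[OF w] by (auto simp: of_nat_nat)
      then show "w \<in> (\<Union>a. unit_level g M a)"
        unfolding unit_level_def using w by blast
    qed
  qed (auto simp: unit_level_def)
qed

lemma ex_bounded_refinement:
  assumes A: "l0_partition M A" and R: "\<And>k. R k \<in> borel_measurable M" "\<And>k w. 0 \<le> R k w"
    and eps: "eps \<in> borel_measurable M" "\<And>w. 0 < eps w"
  obtains Q kk aa bb where "l0_partition M Q"
    and "\<And>m w. w \<in> Q m \<Longrightarrow> w \<in> A (kk m) \<and> R (kk m) w < real (Suc (aa m)) \<and> 1 / eps w < real (Suc (bb m))"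
proof -
  have inv_eps: "(\<lambda>w. 1 / eps w) \<in> borel_measurable M" "\<And>w. 0 \<le> 1 / eps w"
    using eps by (auto intro: less_imp_le)
  define Q where "Q = refine A (\<lambda>k. refine (unit_level (R k) M) (\<lambda>_. unit_level (\<lambda>w. 1 / eps w) M))"
  define kk where "kk m = fst (prod_decode m)" for m
  define aa where "aa m = fst (prod_decode (snd (prod_decode m)))" for m
  define bb where "bb m = snd (prod_decode (snd (prod_decode m)))" for m
  have "l0_partition M Q"
    unfolding Q_def using A R inv_eps
    by (intro l0_partition_refine l0_partition_unit_level) auto
  moreover have "w \<in> A (kk m) \<and> R (kk m) w < real (Suc (aa m)) \<and> 1 / eps w < real (Suc (bb m))"
    if "w \<in> Q m" for m w
    using that unfolding Q_def refine_def kk_def aa_def bb_def unit_level_def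
    by (auto split: prod.splits)
  ultimately show ?thesis
    by (rule that)
qed

context stable_function_family
begin

lemma F_glue_disjointed:
  fixes T :: "nat \<Rightarrow> 'w set"
  assumes T: "\<And>n. T n \<in> sets P" and fs: "\<And>n. fs n \<in> F"
  shows "\<exists>g\<in>F. \<forall>x\<in>K. \<forall>n. AE w in P. w \<in> disjointed T n \<longrightarrow> g x w = fs n x w"
proof -
  obtain g where g: "g \<in> F" "\<forall>x\<in>K. \<forall>k. AE w in P. w \<in> disjoint_partition P T k \<longrightarrow> g x w = fs (k - 1) x w"
    using F_glue[OF l0_partition_disjoint_partition[of T P, OF T], of "\<lambda>k. fs (k - 1)"] fs by blast
  then show ?thesis
    using disjoint_partition_Suc[of T P, OF T] by (metis diff_Suc_1)
qed

lemma code_event_sets: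
  assumes f: "f \<in> F" and XS: "finite XS" "XS \<subseteq> K"
  shows "{w \<in> space P. \<forall>x\<in>XS. \<lfloor>f x w * q\<rfloor> = c x} \<in> sets P"
proof -
  have "{w \<in> space P. \<lfloor>f x w * q\<rfloor> = c x} \<in> sets P" if "x \<in> XS" for x
  proof -
    have [measurable]: "f x \<in> borel_measurable P"
      using F_measurable[OF f] XS(2) that by blast
    show ?thesis
      unfolding floor_eq_iff by measurable
  qed
  then show ?thesis
    using XS(1) by (intro sets.sets_Collect_finite_All) (simp_all add: Collect_conj_eq)
qed

lemma ex_code_on_UN:
  fixes S :: "nat \<Rightarrow> 'w set"
  assumes XS: "finite XS" "XS \<subseteq> K" and S_sets: "\<And>n. S n \<in> sets P" and hs: "\<And>n. hs n \<in> F"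
    and code: "\<And>n. AE w in P. w \<in> S n \<longrightarrow> (\<forall>x\<in>XS. \<lfloor>hs n x w * q\<rfloor> = c x)"
  shows "\<exists>g\<in>F. AE w in P. w \<in> (\<Union>n. S n) \<longrightarrow> (\<forall>x\<in>XS. \<lfloor>g x w * q\<rfloor> = c x)"
proof -
  obtain g where g: "g \<in> F" "\<forall>x\<in>K. \<forall>n. AE w in P. w \<in> disjointed S n \<longrightarrow> g x w = hs n x w"
    using F_glue_disjointed[of S hs] S_sets hs by blast
  have "AE w in P. \<forall>n. (\<forall>x\<in>XS. w \<in> disjointed S n \<longrightarrow> g x w = hs n x w) \<and>
      (w \<in> S n \<longrightarrow> (\<forall>x\<in>XS. \<lfloor>hs n x w * q\<rfloor> = c x))"
    unfolding AE_all_countable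
  proof
    fix n
    have "AE w in P. \<forall>x\<in>XS. w \<in> disjointed S n \<longrightarrow> g x w = hs n x w"
      by (rule AE_finite_allI[OF XS(1)]) (use g(2) XS(2) in blast)
    with code[of n] show "AE w in P. (\<forall>x\<in>XS. w \<in> disjointed S n \<longrightarrow> g x w = hs n x w) \<and>
        (w \<in> S n \<longrightarrow> (\<forall>x\<in>XS. \<lfloor>hs n x w * q\<rfloor> = c x))"
      by eventually_elim blast
  qed
  then have "AE w in P. w \<in> (\<Union>n. S n) \<longrightarrow> (\<forall>x\<in>XS. \<lfloor>g x w * q\<rfloor> = c x)"
  proof (rule AE_mp, intro AE_I2 impI)
    fix w assume h: "\<forall>n. (\<forall>x\<in>XS. w \<in> disjointed S n \<longrightarrow> g x w = hs n x w) \<and>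
        (w \<in> S n \<longrightarrow> (\<forall>x\<in>XS. \<lfloor>hs n x w * q\<rfloor> = c x))"
      and "w \<in> (\<Union>n. S n)"
    then have "w \<in> (\<Union>n. disjointed S n)"
      by (simp add: UN_disjointed_eq)
    then obtain n where "w \<in> disjointed S n"
      by blast
    then show "\<forall>x\<in>XS. \<lfloor>g x w * q\<rfloor> = c x"
      using h disjointed_subset[of S n] by auto
  qed
  then show ?thesis
    using g(1) by blast
qed

text \<open>A code \<open>c\<close> prescribes the rounded values \<open>\<lfloor>f x * q\<rfloor>\<close> on \<open>XS\<close>; the representative is glued
  from members of \<open>F\<close> along an a.e.-greatest event on which the code is realized.\<close>

lemma ex_code_representative:
  assumes XS: "finite XS" "XS \<subseteq> K"
  shows "\<exists>H\<in>F. \<forall>f\<in>F. AE w in P. (\<forall>x\<in>XS. \<lfloor>f x w * q\<rfloor> = c x) \<longrightarrow> (\<forall>x\<in>XS. \<lfloor>H x w * q\<rfloor> = c x)"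
proof -
  define \<S> where "\<S> = {S \<in> sets P. \<exists>h\<in>F. AE w in P. w \<in> S \<longrightarrow> (\<forall>x\<in>XS. \<lfloor>h x w * q\<rfloor> = c x)}"
  have "\<exists>S\<in>\<S>. \<forall>T\<in>\<S>. AE w in P. w \<in> T \<longrightarrow> w \<in> S"
  proof (rule ex_ae_greatest_event)
    show "\<S> \<subseteq> sets P"
      unfolding \<S>_def by blast
    have "{} \<in> \<S>"
      unfolding \<S>_def using F_nonempty by (auto intro: AE_I2)
    then show "\<S> \<noteq> {}"
      by blast
    fix S :: "nat \<Rightarrow> 'w set" assume S: "\<And>n. S n \<in> \<S>"
    then have S_sets: "\<And>n. S n \<in> sets P"
      unfolding \<S>_def by blast
    have "\<forall>n. \<exists>h. h \<in> F \<and> (AE w in P. w \<in> S n \<longrightarrow> (\<forall>x\<in>XS. \<lfloor>h x w * q\<rfloor> = c x))"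
      using S unfolding \<S>_def by blast
    then obtain hs where "\<forall>n. hs n \<in> F \<and> (AE w in P. w \<in> S n \<longrightarrow> (\<forall>x\<in>XS. \<lfloor>hs n x w * q\<rfloor> = c x))"
      by (rule choice[THEN exE])
    then have hs: "\<And>n. hs n \<in> F"
      and code: "\<And>n. AE w in P. w \<in> S n \<longrightarrow> (\<forall>x\<in>XS. \<lfloor>hs n x w * q\<rfloor> = c x)"
      by blast+
    then have "\<exists>g\<in>F. AE w in P. w \<in> (\<Union>n. S n) \<longrightarrow> (\<forall>x\<in>XS. \<lfloor>g x w * q\<rfloor> = c x)"
      using ex_code_on_UN[OF XS, of S hs] S_sets by blast
    then show "(\<Union>n. S n) \<in> \<S>"
      unfolding \<S>_def using S_sets by blast
  qed
  then obtain S H where S: "\<forall>T\<in>\<S>. AE w in P. w \<in> T \<longrightarrow> w \<in> S"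
    and H: "H \<in> F" "AE w in P. w \<in> S \<longrightarrow> (\<forall>x\<in>XS. \<lfloor>H x w * q\<rfloor> = c x)"
    unfolding \<S>_def by blast
  have "AE w in P. (\<forall>x\<in>XS. \<lfloor>f x w * q\<rfloor> = c x) \<longrightarrow> (\<forall>x\<in>XS. \<lfloor>H x w * q\<rfloor> = c x)"
    if f: "f \<in> F" for f
  proof -
    let ?Sf = "{w \<in> space P. \<forall>x\<in>XS. \<lfloor>f x w * q\<rfloor> = c x}"
    have "?Sf \<in> \<S>"
      unfolding \<S>_def using code_event_sets[OF f XS] f by (auto intro!: AE_I2)
    then have "AE w in P. w \<in> ?Sf \<longrightarrow> w \<in> S"
      using S by blast
    moreover have "AE w in P. w \<in> space P"
      by (rule AE_I2) simp
    ultimately show ?thesis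
      using H(2) by eventually_elim auto
  qed
  then show ?thesis
    using H(1) by blast
qed

text \<open>Piece \<open>0\<close> collects the points whose code lies outside \<open>CC\<close>.\<close>

lemma ex_code_partition:
  assumes f: "f \<in> F" and XS: "finite XS" "XS \<subseteq> K" and CC: "countable CC" "CC \<noteq> {}"
  obtains B code where "l0_partition P B" "\<And>j. code j \<in> CC"
    "\<And>w j x. w \<in> B j \<Longrightarrow> restrict (\<lambda>x. \<lfloor>f x w * q\<rfloor>) XS \<in> CC \<Longrightarrow> x \<in> XS \<Longrightarrow> \<lfloor>f x w * q\<rfloor> = code j x"
proof -
  define S where "S i = {w \<in> space P. \<forall>x\<in>XS. \<lfloor>f x w * q\<rfloor> = from_nat_into CC i x}" for i
  have S_sets: "S i \<in> sets P" for i
    unfolding S_def by (rule code_event_sets[OF f XS])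
  define B where "B = disjoint_partition P S"
  define code where "code j = from_nat_into CC (j - 1)" for j
  have B: "l0_partition P B"
    unfolding B_def by (rule l0_partition_disjoint_partition) (rule S_sets)
  have code: "code j \<in> CC" for j
    unfolding code_def by (rule from_nat_into[OF CC(2)])
  have code_eq: "\<lfloor>f x w * q\<rfloor> = code j x"
    if w: "w \<in> B j" and c: "restrict (\<lambda>x. \<lfloor>f x w * q\<rfloor>) XS \<in> CC" and x: "x \<in> XS" for w j x
  proof -
    obtain i where "from_nat_into CC i = restrict (\<lambda>x. \<lfloor>f x w * q\<rfloor>) XS"
      using from_nat_into_surj[OF CC(1) c] by blast
    moreover have "w \<in> space P"
      by (rule l0_partition_subset_space[OF B w])
    ultimately have "w \<in> S i"
      unfolding S_def by auto
    have "j \<noteq> 0"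
    proof
      assume "j = 0"
      then show False
        using w \<open>w \<in> S i\<close> by (auto simp: B_def disjoint_partition_0)
    qed
    then obtain i' where j: "j = Suc i'"
      using not0_implies_Suc by blast
    then have "w \<in> S i'"
      using w disjointed_subset[of S i'] disjoint_partition_Suc[of S P, OF S_sets]
      unfolding B_def by auto
    then show ?thesis
      unfolding S_def code_def j using x by simp
  qed
  show ?thesis
  proof (rule that[of B code])
    show "l0_partition P B"
      by (rule B)
    show "code j \<in> CC" for j
      by (rule code)
    show "\<lfloor>f x w * q\<rfloor> = code j x"
      if "w \<in> B j" "restrict (\<lambda>x. \<lfloor>f x w * q\<rfloor>) XS \<in> CC" "x \<in> XS" for w j x
      using that by (rule code_eq)
  qed
qed

text \<open>One representative for each of the finitely many codes of values bounded by \<open>a + 1\<close>.\<close>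

lemma quantized_net:
  assumes XS: "finite XS" "XS \<subseteq> K"
  shows "\<exists>Y. finite Y \<and> Y \<noteq> {} \<and> Y \<subseteq> F \<and> (\<forall>f\<in>F. \<exists>B zs. l0_partition P B \<and> (\<forall>j. zs j \<in> Y) \<and>
    (AE w in P. (\<forall>x\<in>XS. \<bar>f x w\<bar> < real (Suc a)) \<longrightarrow>
       (\<forall>j. w \<in> B j \<longrightarrow> (\<forall>x\<in>XS. \<bar>f x w - zs j x w\<bar> < 1 / real (Suc b)))))"
proof -
  define q where "q = real (Suc b)"
  define CC where "CC = PiE XS (\<lambda>_. {- int (Suc a * Suc b) .. int (Suc a * Suc b)})"
  have CC: "finite CC" "CC \<noteq> {}"
    unfolding CC_def using XS(1) by (auto intro: finite_PiE simp: PiE_eq_empty_iff)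
  have "\<forall>c. \<exists>H. H \<in> F \<and> (\<forall>f\<in>F. AE w in P. (\<forall>x\<in>XS. \<lfloor>f x w * q\<rfloor> = c x) \<longrightarrow> (\<forall>x\<in>XS. \<lfloor>H x w * q\<rfloor> = c x))"
    using ex_code_representative[OF XS] by blast
  then obtain H where "\<forall>c. H c \<in> F \<and>
      (\<forall>f\<in>F. AE w in P. (\<forall>x\<in>XS. \<lfloor>f x w * q\<rfloor> = c x) \<longrightarrow> (\<forall>x\<in>XS. \<lfloor>H c x w * q\<rfloor> = c x))"
    by (rule choice[THEN exE])
  then have H: "\<And>c. H c \<in> F"
    and H_code: "\<And>c f. f \<in> F \<Longrightarrow>
      AE w in P. (\<forall>x\<in>XS. \<lfloor>f x w * q\<rfloor> = c x) \<longrightarrow> (\<forall>x\<in>XS. \<lfloor>H c x w * q\<rfloor> = c x)"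
    by blast+
  have "\<exists>B zs. l0_partition P B \<and> (\<forall>j. zs j \<in> H ` CC) \<and>
      (AE w in P. (\<forall>x\<in>XS. \<bar>f x w\<bar> < real (Suc a)) \<longrightarrow>
         (\<forall>j. w \<in> B j \<longrightarrow> (\<forall>x\<in>XS. \<bar>f x w - zs j x w\<bar> < 1 / real (Suc b))))"
    if f: "f \<in> F" for f
  proof -
    obtain B code where B: "l0_partition P B" and code: "\<And>j. code j \<in> CC"
      and code_eq: "\<And>w j x. w \<in> B j \<Longrightarrow> restrict (\<lambda>x. \<lfloor>f x w * q\<rfloor>) XS \<in> CC \<Longrightarrow> x \<in> XS \<Longrightarrow>
        \<lfloor>f x w * q\<rfloor> = code j x"
      by (rule ex_code_partition[where q = q, OF f XS countable_finite[OF CC(1)] CC(2)]) (rule that)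
    have "AE w in P. \<forall>j. (\<forall>x\<in>XS. \<lfloor>f x w * q\<rfloor> = code j x) \<longrightarrow> (\<forall>x\<in>XS. \<lfloor>H (code j) x w * q\<rfloor> = code j x)"
      unfolding AE_all_countable using H_code[OF f] by blast
    then have "AE w in P. (\<forall>x\<in>XS. \<bar>f x w\<bar> < real (Suc a)) \<longrightarrow>
         (\<forall>j. w \<in> B j \<longrightarrow> (\<forall>x\<in>XS. \<bar>f x w - H (code j) x w\<bar> < 1 / real (Suc b)))"
    proof (eventually_elim, intro impI allI ballI)
      fix w j x
      assume rep: "\<forall>j. (\<forall>x\<in>XS. \<lfloor>f x w * q\<rfloor> = code j x) \<longrightarrow> (\<forall>x\<in>XS. \<lfloor>H (code j) x w * q\<rfloor> = code j x)"
        and bounded: "\<forall>x\<in>XS. \<bar>f x w\<bar> < real (Suc a)" and w: "w \<in> B j" and x: "x \<in> XS"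
      have "restrict (\<lambda>x. \<lfloor>f x w * q\<rfloor>) XS \<in> CC"
        unfolding CC_def q_def using bounded floor_mult_bounded by auto
      then have "\<forall>x\<in>XS. \<lfloor>f x w * q\<rfloor> = code j x"
        using code_eq[OF w] by blast
      then have "\<lfloor>f x w * q\<rfloor> = \<lfloor>H (code j) x w * q\<rfloor>"
        using rep x by auto
      then show "\<bar>f x w - H (code j) x w\<bar> < 1 / real (Suc b)"
        unfolding q_def by (rule floor_eq_imp_abs_diff_less)
    qed
    moreover have "H (code j) \<in> H ` CC" for j
      using code by blast
    ultimately show ?thesis
      using B by (intro exI[of _ B] exI[of _ "\<lambda>j. H (code j)"]) auto
  qed
  moreover have "finite (H ` CC)" "H ` CC \<noteq> {}" "H ` CC \<subseteq> F"
    using CC H by auto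
  ultimately show ?thesis
    by blast
qed

lemma ex_bound_on_centres:
  assumes pb: "pointwise_bounded P X F"
    and XX: "\<And>k. finite (XX k)" "\<And>k. XX k \<noteq> {}" "\<And>k. XX k \<subseteq> K"
  obtains R where "\<And>k. R k \<in> borel_measurable P" "\<And>k w. 0 \<le> R k w"
    "\<And>k x f. x \<in> XX k \<Longrightarrow> f \<in> F \<Longrightarrow> AE w in P. \<bar>f x w\<bar> \<le> R k w"
proof -
  have "\<forall>x. \<exists>\<rho>. x \<in> K \<longrightarrow> \<rho> \<in> borel_measurable P \<and> (\<forall>f\<in>F. AE w in P. \<bar>f x w\<bar> \<le> \<rho> w)"
    using pb unfolding pointwise_bounded_def L0_def leae_def by blast
  then obtain \<rho> where \<rho>: "\<And>x. x \<in> K \<Longrightarrow> \<rho> x \<in> borel_measurable P"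
    "\<And>x f. x \<in> K \<Longrightarrow> f \<in> F \<Longrightarrow> AE w in P. \<bar>f x w\<bar> \<le> \<rho> x w"
    by metis
  define R where "R k w = Max ((\<lambda>x. \<bar>\<rho> x w\<bar>) ` XX k)" for k w
  have R_ge: "\<bar>\<rho> x w\<bar> \<le> R k w" if "x \<in> XX k" for x k w
    unfolding R_def using XX(1) that by (intro Max_ge) auto
  have R_meas: "R k \<in> borel_measurable P" for k
    unfolding R_def
  proof (rule borel_measurable_Max[OF XX(1)])
    fix x assume "x \<in> XX k"
    then have "\<rho> x \<in> borel_measurable P"
      using XX(3) \<rho>(1) by blast
    then show "(\<lambda>w. \<bar>\<rho> x w\<bar>) \<in> borel_measurable P"
      by measurable
  qed
  have R_nonneg: "0 \<le> R k w" for k w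
    using XX(2)[of k] R_ge by (metis abs_ge_zero all_not_in_conv order_trans)
  have R_bound: "AE w in P. \<bar>f x w\<bar> \<le> R k w" if x: "x \<in> XX k" and f: "f \<in> F" for k x f
  proof -
    have "AE w in P. \<bar>f x w\<bar> \<le> \<rho> x w"
      using \<rho>(2)[OF _ f] x XX(3) by blast
    then show ?thesis
    proof eventually_elim
      case (elim w)
      then show ?case
        using R_ge[OF x, of w] abs_ge_self[of "\<rho> x w"] by linarith
    qed
  qed
  show ?thesis
  proof (rule that[of R])
    show "R k \<in> borel_measurable P" for k
      by (rule R_meas)
    show "0 \<le> R k w" for k w
      by (rule R_nonneg)
    show "AE w in P. \<bar>f x w\<bar> \<le> R k w" if "x \<in> XX k" "f \<in> F" for k x f
      using that by (rule R_bound)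
  qed
qed

lemma stable_finite_net:
  assumes A: "l0_partition P A" and XX: "\<And>k. finite (XX k)" "\<And>k. XX k \<noteq> {}" "\<And>k. XX k \<subseteq> K"
    and pb: "pointwise_bounded P X F"
    and eps: "eps \<in> borel_measurable P" "\<And>w. 0 < eps w"
  shows "\<exists>N. stable_finite P F N \<and>
    (\<forall>f\<in>F. \<exists>g\<in>N. \<forall>k. \<forall>x\<in>XX k. AE w in P. w \<in> A k \<longrightarrow> \<bar>f x w - g x w\<bar> < eps w)"
proof -
  obtain R where R: "\<And>k. R k \<in> borel_measurable P" "\<And>k w. 0 \<le> R k w"
    and bound: "\<And>k x f. x \<in> XX k \<Longrightarrow> f \<in> F \<Longrightarrow> AE w in P. \<bar>f x w\<bar> \<le> R k w"
    by (rule ex_bound_on_centres[of XX, OF pb XX]) (rule that)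
  obtain Q kk aa bb where Q: "l0_partition P Q"
    and Q_bounds: "\<And>m w. w \<in> Q m \<Longrightarrow>
      w \<in> A (kk m) \<and> R (kk m) w < real (Suc (aa m)) \<and> 1 / eps w < real (Suc (bb m))"
    using ex_bounded_refinement[OF A _ _ eps] R by metis
  define approx where "approx m f B zs \<longleftrightarrow>
    (AE w in P. (\<forall>x\<in>XX (kk m). \<bar>f x w\<bar> < real (Suc (aa m))) \<longrightarrow>
       (\<forall>j. w \<in> B j \<longrightarrow> (\<forall>x\<in>XX (kk m). \<bar>f x w - zs j x w\<bar> < 1 / real (Suc (bb m)))))"
    for m f B and zs :: "nat \<Rightarrow> 'e \<Rightarrow> 'w \<Rightarrow> real"
  have "\<exists>Y. finite Y \<and> Y \<noteq> {} \<and> Y \<subseteq> F \<and>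
      (\<forall>f\<in>F. \<exists>B zs. l0_partition P B \<and> (\<forall>j. zs j \<in> Y) \<and> approx m f B zs)" for m
    unfolding approx_def by (rule quantized_net[OF XX(1)[of "kk m"] XX(3)[of "kk m"]])
  then obtain Y where Y: "\<And>m. finite (Y m)" "\<And>m. Y m \<noteq> {}" "\<And>m. Y m \<subseteq> F"
    and Y_net: "\<And>m f. f \<in> F \<Longrightarrow> \<exists>B zs. l0_partition P B \<and> (\<forall>j. zs j \<in> Y m) \<and> approx m f B zs"
    by metis
  define N where "N = {fcc Q ys | ys. \<forall>m. ys m \<in> stF P (Y m)}"
  have "stable_finite P F N"
    unfolding stable_finite_def N_def using Q Y by (intro exI[of _ Q] exI[of _ Y]) auto
  moreover have "\<exists>g\<in>N. \<forall>k. \<forall>x\<in>XX k. AE w in P. w \<in> A k \<longrightarrow> \<bar>f x w - g x w\<bar> < eps w"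
    if f: "f \<in> F" for f
  proof -
    obtain B zs where B: "\<And>m. l0_partition P (B m)" and zs: "\<And>m j. zs m j \<in> Y m"
      and "\<And>m. approx m f (B m) (zs m)"
      using Y_net[OF f] by metis
    then have approx: "\<And>m. AE w in P. (\<forall>x\<in>XX (kk m). \<bar>f x w\<bar> < real (Suc (aa m))) \<longrightarrow>
       (\<forall>j. w \<in> B m j \<longrightarrow> (\<forall>x\<in>XX (kk m). \<bar>f x w - zs m j x w\<bar> < 1 / real (Suc (bb m))))"
      unfolding approx_def by blast+
    define g where "g = fcc Q (\<lambda>m. fcc (B m) (zs m))"
    have "g \<in> N"
      unfolding g_def N_def stF_def using B zs by blast
    moreover have "AE w in P. w \<in> A k \<longrightarrow> \<bar>f x w - g x w\<bar> < eps w" if x: "x \<in> XX k" for k x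
    proof -
      have "AE w in P. \<forall>x'\<in>XX k. \<bar>f x' w\<bar> \<le> R k w"
        using XX(1) bound[OF _ f] by (intro AE_finite_allI) auto
      moreover have "AE w in P. \<forall>m. (\<forall>x\<in>XX (kk m). \<bar>f x w\<bar> < real (Suc (aa m))) \<longrightarrow>
       (\<forall>j. w \<in> B m j \<longrightarrow> (\<forall>x\<in>XX (kk m). \<bar>f x w - zs m j x w\<bar> < 1 / real (Suc (bb m))))"
        unfolding AE_all_countable using approx by blast
      moreover have "AE w in P. w \<in> space P"
        by (rule AE_I2) simp
      ultimately show ?thesis
      proof (eventually_elim, intro impI)
        case (elim w)
        assume "w \<in> A k"
        obtain m where m: "w \<in> Q m"
          using l0_partition_cover[OF Q elim(3)] by blast
        have "kk m = k"
          using l0_partition_unique[OF A \<open>w \<in> A k\<close>] Q_bounds[OF m] by blast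
        then have bounds: "R k w < real (Suc (aa m))" "1 / eps w < real (Suc (bb m))"
          using Q_bounds[OF m] by auto
        have "\<bar>f x' w\<bar> < real (Suc (aa m))" if "x' \<in> XX k" for x'
          using elim(1) that bounds(1) by force
        then obtain j where j: "w \<in> B m j"
          and close: "\<bar>f x w - zs m j x w\<bar> < 1 / real (Suc (bb m))"
          using elim(2) l0_partition_cover[OF B elim(3)] x \<open>kk m = k\<close> by blast
        have "g x w = zs m j x w"
          unfolding g_def fcc_eq[OF Q m] fcc_eq[OF B j] by simp
        moreover have "1 / real (Suc (bb m)) < eps w"
          using bounds(2) eps(2)[of w] by (simp add: field_simps)
        ultimately show "\<bar>f x w - g x w\<bar> < eps w"
          using close by linarith
      qed
    qed
    ultimately show ?thesis
      by blast
  qed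
  ultimately show ?thesis
    by blast
qed

section \<open>Bounded equicontinuous families are totally bounded\<close>

lemma ex_small_basic_nbhds:
  assumes equi: "stable_equicontinuous P X F" and r: "r \<in> L0pp P"
  obtains W where "\<And>x. x \<in> K \<Longrightarrow> W x \<in> basis" "\<And>x. x \<in> K \<Longrightarrow> x \<in> W x"
    "\<And>x y f. x \<in> K \<Longrightarrow> y \<in> W x \<Longrightarrow> f \<in> F \<Longrightarrow> leae P (\<lambda>w. \<bar>f x w - f y w\<bar>) r"
proof -
  define small_nbhd where "small_nbhd x V \<longleftrightarrow> V \<in> basis \<and> x \<in> V \<and>
    (\<forall>y\<in>V. \<forall>f\<in>F. leae P (\<lambda>w. \<bar>f x w - f y w\<bar>) r)" for x V
  have "\<exists>V. small_nbhd x V" if x: "x \<in> K" for x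
  proof -
    have "\<exists>V. (\<exists>U. openin X U \<and> x \<in> U \<and> U \<subseteq> V) \<and> V \<subseteq> K \<and>
        (\<forall>y\<in>V. \<forall>f\<in>F. leae P (\<lambda>w. \<bar>f x w - f y w\<bar>) r)"
      using bspec[OF bspec[OF equi[unfolded stable_equicontinuous_def] x] r] .
    then obtain U V where U: "openin X U" "x \<in> U" "U \<subseteq> V"
      and small: "\<forall>y\<in>V. \<forall>f\<in>F. leae P (\<lambda>w. \<bar>f x w - f y w\<bar>) r"
      by (elim exE conjE)
    obtain V' where "V' \<in> basis" "x \<in> V'" "V' \<subseteq> U"
      using basis_refines[OF U(1,2)] by blast
    then have "small_nbhd x V'"
      unfolding small_nbhd_def using U(3) small by blast
    then show ?thesis ..
  qed
  then obtain W where "\<And>x. x \<in> K \<Longrightarrow> small_nbhd x (W x)"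
    by metis
  then show ?thesis
    using that[of W] unfolding small_nbhd_def by blast
qed

lemma totally_bounded_if_bounded_equicontinuous:
  assumes pb: "pointwise_bounded P X F" and equi: "stable_equicontinuous P X F"
  shows "stable_totally_bounded P X F"
  unfolding stable_totally_bounded_def
proof
  fix r assume r: "r \<in> L0pp P"
  define eps where "eps w = (if 0 < r w then r w else 1) / 3" for w
  have eps: "eps \<in> borel_measurable P" "\<And>w. 0 < eps w"
    unfolding eps_def using L0pp_measurable[OF r] by auto
  then have "eps \<in> L0pp P"
    unfolding L0pp_def L0_def by simp
  have eps_r: "3 * eps w = r w" if "0 < r w" for w
    using that unfolding eps_def by simp
  have three_eps: "AE w in P. 3 * eps w = r w"
    using L0pp_AE_pos[OF r] by eventually_elim (rule eps_r)
  obtain W where W: "\<And>x. x \<in> K \<Longrightarrow> W x \<in> basis" "\<And>x. x \<in> K \<Longrightarrow> x \<in> W x"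
    and W_small: "\<And>x y f. x \<in> K \<Longrightarrow> y \<in> W x \<Longrightarrow> f \<in> F \<Longrightarrow> leae P (\<lambda>w. \<bar>f x w - f y w\<bar>) eps"
    by (rule ex_small_basic_nbhds[OF equi \<open>eps \<in> L0pp P\<close>]) (rule that)
  interpret basic_neighbourhoods P smul X F W
    by unfold_locales (use W in blast)+
  obtain A XX where C: "finite_centres A XX" and cov: "\<forall>y\<in>K. AE w in P. covered A XX y w"
    using ex_finite_cover by blast
  obtain N where N: "stable_finite P F N"
    and net: "\<forall>f\<in>F. \<exists>g\<in>N. \<forall>k. \<forall>x\<in>XX k. AE w in P. w \<in> A k \<longrightarrow> \<bar>f x w - g x w\<bar> < eps w"
    using stable_finite_net[of A XX, OF _ _ _ _ pb eps] C unfolding finite_centres_def by blast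
  have "\<exists>g\<in>N. ltae P (dinf P X f g) r" if f: "f \<in> F" for f
  proof -
    obtain g where g: "g \<in> N" and close: "\<forall>k. \<forall>x\<in>XX k. AE w in P. w \<in> A k \<longrightarrow> \<bar>f x w - g x w\<bar> < eps w"
      using net f by blast
    obtain g' where g': "g' \<in> F" "\<forall>x\<in>K. eqae P (g x) (g' x)"
      using stable_finite_ae_in_F[OF N g] by blast
    obtain y where y: "y \<in> K" "dinf P X f g = (\<lambda>w. \<bar>f y w - g y w\<bar>)"
      using dinf_attained(1)[OF f g'] by blast
    have "AE w in P. \<bar>f y w - g' y w\<bar> < 3 * eps w"
    proof (rule covered_estimate[where eps=eps, OF W_small C y(1) _ f g'(1)])
      show "AE w in P. covered A XX y w"
        using cov y by blast
      fix k x assume "x \<in> XX k"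
      then have "AE w in P. w \<in> A k \<longrightarrow> \<bar>f x w - g x w\<bar> < eps w" "AE w in P. g x w = g' x w"
        using close g'(2) C unfolding finite_centres_def eqae_def by blast+
      then show "AE w in P. w \<in> A k \<longrightarrow> \<bar>f x w - g' x w\<bar> < eps w"
        by eventually_elim simp
    qed
    moreover have "AE w in P. g y w = g' y w"
      using g'(2) y(1) unfolding eqae_def by blast
    ultimately have "AE w in P. \<bar>f y w - g y w\<bar> < r w"
      using three_eps by eventually_elim simp
    then have "ltae P (dinf P X f g) r"
      unfolding ltae_def y(2) .
    then show ?thesis
      using g by blast
  qed
  then show "\<exists>N. stable_finite P F N \<and> (\<forall>f\<in>F. \<exists>g\<in>N. ltae P (dinf P X f g) r)"
    using N by blast
qed

end

theorem theorem6:
  fixes P :: "'w measure"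
    and smul :: "('w \<Rightarrow> real) \<Rightarrow> 'e::ab_group_add \<Rightarrow> 'e"
    and X :: "'e topology"
    and M :: "('e \<Rightarrow> 'w \<Rightarrow> real) set"
  assumes "prob_space P"
    and "stable_L0_module P smul"
    and "stable_top_space P smul X"
    and "stable_compact P smul X"
    and "stable_subset_C P smul X M"
  shows "stable_totally_bounded P X M \<longleftrightarrow>
           (pointwise_bounded P X M \<and> stable_equicontinuous P X M)"
proof -
  interpret stable_function_family P smul X M
    using assms by (intro stable_function_family.intro stable_module.intro
        stable_function_family_axioms.intro stable_module_axioms.intro)
  show ?thesis
    using pointwise_bounded_if_totally_bounded stable_equicontinuous_if_totally_bounded
      totally_bounded_if_bounded_equicontinuous by blast
qed

end
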